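(* Let $\mathbf A$ be a nonzero $m\times n$ real matrix and $\mathbf b\ne\mathbf 0$ with $\mathbf A\mathbf x=\mathbf b$ consistent, $\alpha>0$, and let $f,\mathcal Y^*,\mathbf x^*,\nu$ be as defined in the context, with $f^*=\min f$. Let $\mathbf y^{(0)}\in\mathbb R^m$ be arbitrary, $0<h<2\nu/(\alpha^2\|\mathbf A\|_2^4)$, and for $k\ge0$ $$\mathbf x^{(k+1)}=\alpha\,\mathrm{shrink}(\mathbf A^\top\mathbf y^{(k)}),\qquad \mathbf y^{(k+1)}=\mathbf y^{(k)}-h\big(-\mathbf b+\alpha\mathbf A\,\mathrm{shrink}(\mathbf A^\top\mathbf y^{(k)})\big).$$ Then, with $\mu:=1-2h\nu+h^2\alpha^2\|\mathbf A\|_2^4\in(0,1)$ and $L:=\alpha\|\mathbf A\|_2^2$ (a Lipschitz constant of $\nabla f$), for all $k\ge0$: $$\mathrm{dist}(\mathbf y^{(k)},\mathcal Y^* )\le\mu^{k/2}\mathrm{dist}(\mathbf y^{(0)},\mathcal Y^* ),\qquad f(\mathbf y^{(k)})-f^*\le\frac L2\mu^k\mathrm{dist}^2(\mathbf y^{(0)},\mathcal Y^* ),$$ $$\|\mathbf x^{(k+1)}-\mathbf x^*\|_2\le\alpha\|\mathbf A\|_2\,\mathrm{dist}(\mathbf y^{(k)},\mathcal Y^* ).$$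
   Context: $\mathbf x^*$ is the unique solution of $\min_{\mathbf x}\{\|\mathbf x\|_1+\frac{1}{2\alpha}\|\mathbf x\|_2^2:\mathbf A\mathbf x=\mathbf b\}$. $\mathrm{shrink}(\mathbf z)=\mathrm{sign}(\mathbf z)\max\{|\mathbf z|-\mathbf 1,\mathbf 0\}$ componentwise. $f(\mathbf y)=-\mathbf b^\top\mathbf y+\frac\alpha2\|\mathrm{shrink}(\mathbf A^\top\mathbf y)\|_2^2$ with gradient $-\mathbf b+\alpha\mathbf A\,\mathrm{shrink}(\mathbf A^\top\mathbf y)$; $\mathcal Y^*=\{\mathbf y:\alpha\,\mathrm{shrink}(\mathbf A^\top\mathbf y)=\mathbf x^*\}$ is the set of minimizers of $f$. $\nu=\lambda_{\mathbf A}\min_{i\in\mathrm{supp}(\mathbf x^* )}\frac{\alpha|x_i^*|}{|x_i^*|+2\alpha}$, where $\lambda_{\mathbf A}$ is the minimum, over all nonzero submatrices $\mathbf C$ of $\mathbf A$ formed by subsets of columns, of the smallest strictly positive eigenvalue of $\mathbf C\mathbf C^\top$. $\mathrm{dist}(\mathbf z,\mathcal Z)=\min_{\mathbf z'\in\mathcal Z}\|\mathbf z-\mathbf z'\|_2$; $\|\mathbf A\|_2$ is the spectral norm. *)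

theory Defs
  imports "HOL-Analysis.Analysis"
begin

definition shrink :: "real^'k \<Rightarrow> real^'k" where
  "shrink z = (\<chi> i. sgn (z $ i) * max (\<bar>z $ i\<bar> - 1) 0)"

definition l1norm :: "real^'k \<Rightarrow> real" where
  "l1norm x = (\<Sum>i\<in>UNIV. \<bar>x $ i\<bar>)"

definition rbp_obj :: "real \<Rightarrow> real^'n \<Rightarrow> real" where
  "rbp_obj \<alpha> x = l1norm x + (1 / (2 * \<alpha>)) * (norm x)\<^sup>2"

definition is_rbp_solution :: "real^'n^'m \<Rightarrow> real^'m \<Rightarrow> real \<Rightarrow> real^'n \<Rightarrow> bool" where
  "is_rbp_solution A b \<alpha> x \<longleftrightarrow>
     A *v x = b \<and> (\<forall>x'. A *v x' = b \<longrightarrow> rbp_obj \<alpha> x \<le> rbp_obj \<alpha> x')"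

definition dual_f :: "real^'n^'m \<Rightarrow> real^'m \<Rightarrow> real \<Rightarrow> real^'m \<Rightarrow> real" where
  "dual_f A b \<alpha> y = - (b \<bullet> y) + (\<alpha> / 2) * (norm (shrink (transpose A *v y)))\<^sup>2"

definition dual_grad :: "real^'n^'m \<Rightarrow> real^'m \<Rightarrow> real \<Rightarrow> real^'m \<Rightarrow> real^'m" where
  "dual_grad A b \<alpha> y = - b + \<alpha> *\<^sub>R (A *v shrink (transpose A *v y))"

definition Ystar :: "real^'n^'m \<Rightarrow> real \<Rightarrow> real^'n \<Rightarrow> (real^'m) set" where
  "Ystar A \<alpha> xs = {y. \<alpha> *\<^sub>R shrink (transpose A *v y) = xs}"

text \<open>C C^T for the column submatrix C of A with column index set S.\<close>
definition colsub_gram :: "real^'n^'m \<Rightarrow> 'n set \<Rightarrow> real^'m^'m" where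
  "colsub_gram A S = (\<chi> i k. \<Sum>j\<in>S. A $ i $ j * A $ k $ j)"

definition is_eigenvalue :: "real^'m^'m \<Rightarrow> real \<Rightarrow> bool" where
  "is_eigenvalue M l \<longleftrightarrow> (\<exists>v. v \<noteq> 0 \<and> M *v v = l *\<^sub>R v)"

definition lambdaA :: "real^'n^'m \<Rightarrow> real" where
  "lambdaA A = Min {l. \<exists>S. (\<exists>j\<in>S. column j A \<noteq> 0) \<and> 0 < l \<and> is_eigenvalue (colsub_gram A S) l}"

definition nu_const :: "real^'n^'m \<Rightarrow> real \<Rightarrow> real^'n \<Rightarrow> real" where
  "nu_const A \<alpha> xs = lambdaA A *
     Min ((\<lambda>i. \<alpha> * \<bar>xs $ i\<bar> / (\<bar>xs $ i\<bar> + 2 * \<alpha>)) ` {i. xs $ i \<noteq> 0})"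

definition spec_norm :: "real^'n^'m \<Rightarrow> real" where
  "spec_norm A = onorm (\<lambda>x. A *v x)"

end

theory Submission
  imports Defs
begin

text \<open>
  The dual objective f(y) = -b.y + alpha/2 |shrink(A^T y)|^2 is convex and has an
  (alpha |A|^2)-Lipschitz gradient; this follows coordinatewise from properties of
  the scalar soft-thresholding map sh.  The heart of the argument is a
  restricted strong convexity (restricted secant) inequality
     nu |y - P y|^2 <= (grad f(y) - grad f(P y)) . (y - P y),
  where P y is a nearest point of the solution set Y*.  It is proved by
  (i) a variational characterisation of P y and Farkas' lemma, which write y - P y
  as a combination of linearly independent (signed) columns of A with
  sign-constrained coefficients, (ii) a Rayleigh-quotient bound by lambda_A for
  such combinations, and (iii) a coordinatewise lower bound on the monotonicity
  of sh at support and off-support points of x*.  Nonemptiness of Y* comes from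
  coercivity of f on the range of A^T and optimality of x*.  Finally an abstract
  contraction lemma for gradient steps under the restricted secant inequality and
  Lipschitz continuity gives the three convergence estimates.
\<close>

section \<open>Scalar soft thresholding\<close>

definition sh :: "real \<Rightarrow> real" where "sh t = sgn t * max (\<bar>t\<bar> - 1) 0"

lemma shrink_nth: "shrink z $ i = sh (z $ i)"
  by (simp add: shrink_def sh_def)

lemma sh_cases: "sh t = (if t > 1 then t - 1 else if t < -1 then t + 1 else 0)"
  by (auto simp: sh_def sgn_if max_def)

lemma sh_zero: "\<bar>w\<bar> \<le> 1 \<Longrightarrow> sh w = 0"
  unfolding sh_cases by auto

lemma sh_sub: "\<bar>sh w - w\<bar> \<le> 1"
  unfolding sh_cases by auto

lemma sh_lip: "\<bar>sh a - sh b\<bar> \<le> \<bar>a - b\<bar>"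
  unfolding sh_cases by auto

lemma sh_inverse_nonzero:
  assumes "\<alpha> > 0" "\<alpha> * sh w = x" "x \<noteq> 0"
  shows "w = sgn x * (1 + \<bar>x\<bar> / \<alpha>)"
proof -
  consider "w > 1" | "w < -1" | "-1 \<le> w \<and> w \<le> 1" by linarith
  then show ?thesis
  proof cases
    case 1
    then have "x = \<alpha> * (w - 1)" using assms unfolding sh_cases by simp
    moreover have "x > 0" using 1 assms calculation by simp
    ultimately show ?thesis using assms by (simp add: field_simps)
  next
    case 2
    then have "x = \<alpha> * (w + 1)" using assms unfolding sh_cases by simp
    moreover have "x < 0" using 2 assms calculation by (simp add: mult_pos_neg)
    ultimately show ?thesis using assms by (simp add: field_simps)
  next
    case 3
    then show ?thesis using assms unfolding sh_cases by simp
  qed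
qed

lemma sh_inverse_zero:
  assumes "\<alpha> > 0" "\<alpha> * sh w = 0"
  shows "\<bar>w\<bar> \<le> 1"
  using assms unfolding sh_cases by (auto split: if_splits)

text \<open>The function psi(t) = sh(t)^2/2 has derivative sh; it is convex.\<close>
lemma sh_convex: "(sh b)^2 / 2 + sh b * (a - b) \<le> (sh a)^2 / 2"
proof -
  have e: "(sh a)^2/2 - (sh b)^2/2 - sh b * (a - b)
      = (sh a - sh b)^2/2 + sh b * ((sh a - sh b) - (a - b))"
    by (simp add: power2_eq_square field_simps)
  have "0 \<le> sh b * ((sh a - sh b) - (a - b))"
    unfolding sh_cases by (auto intro: mult_nonneg_nonneg mult_nonpos_nonpos)
  then show ?thesis using e by (smt (verit) zero_le_power2 divide_nonneg_pos)
qed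

text \<open>|sh a| is the distance of a to the dead zone [-1, 1], so it is bounded by the
  distance of a to any point s of the dead zone.\<close>
lemma sh_sq_le_dist:
  assumes "\<bar>s\<bar> \<le> 1"
  shows "(sh a)^2 \<le> (a - s)^2"
proof -
  have "\<bar>sh a\<bar> \<le> \<bar>a - s\<bar>" using assms unfolding sh_cases by auto
  then have "\<bar>sh a\<bar>^2 \<le> \<bar>a - s\<bar>^2" by (rule power_mono) simp
  then show ?thesis by simp
qed

text \<open>Descent lemma for psi (its derivative sh is 1-Lipschitz): compare psi(a) with
  half the squared distance from a to b - sh(b), the point of the dead zone nearest to b.\<close>
lemma sh_descent: "(sh a)^2 / 2 \<le> (sh b)^2 / 2 + sh b * (a - b) + (a - b)^2 / 2"
proof -
  have "\<bar>b - sh b\<bar> \<le> 1" using sh_sub[of b] by (simp add: abs_minus_commute)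
  then have "(sh a)^2 \<le> (a - (b - sh b))^2" by (rule sh_sq_le_dist)
  also have "\<dots> = (sh b)^2 + 2 * (sh b * (a - b)) + (a - b)^2"
    by (simp add: power2_eq_square algebra_simps)
  finally show ?thesis by simp
qed

lemma sh_odd: "sh (- t) = - sh t"
  unfolding sh_cases by auto

text \<open>Strong monotonicity of sh relative to the point 1 + beta (beta > 0), a
  preimage of the nonzero value beta: the modulus is beta / (beta + 2).\<close>
lemma sh_monotone_at_positive:
  assumes "\<beta> > 0"
  shows "\<beta> / (\<beta> + 2) * (z - (1 + \<beta>))^2 \<le> (sh z - sh (1 + \<beta>)) * (z - (1 + \<beta>))"
proof -
  define d where "d = z - (1 + \<beta>)"
  have shb: "sh (1 + \<beta>) = \<beta>" using assms unfolding sh_cases by auto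
  have "\<beta> * d^2 \<le> ((sh z - \<beta>) * d) * (\<beta> + 2)"
  proof -
    consider "z > 1" | "z < -1" | "-1 \<le> z \<and> z \<le> 1" by linarith
    then show ?thesis
    proof cases
      case 1
      then have e: "sh z - \<beta> = d" unfolding sh_cases d_def by simp
      have "((sh z - \<beta>) * d) * (\<beta> + 2) - \<beta> * d^2 = 2 * d^2" unfolding e
        by (simp add: power2_eq_square algebra_simps)
      then show ?thesis by (smt (verit) zero_le_power2)
    next
      case 2
      then have e: "sh z - \<beta> = d + 2" unfolding sh_cases d_def by simp
      have "((sh z - \<beta>) * d) * (\<beta> + 2) - \<beta> * d^2 = 2 * ((-d) * (-(d + \<beta> + 2)))" unfolding e
        by (simp add: power2_eq_square algebra_simps)
      moreover have "0 \<le> (-d) * (-(d + \<beta> + 2))" using 2 assms unfolding d_def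
        by (intro mult_nonneg_nonneg) auto
      ultimately show ?thesis by linarith
    next
      case 3
      then have e: "sh z - \<beta> = - \<beta>" unfolding sh_cases d_def by simp
      have "((sh z - \<beta>) * d) * (\<beta> + 2) - \<beta> * d^2 = \<beta> * ((-d) * (d + \<beta> + 2))" unfolding e
        by (simp add: power2_eq_square algebra_simps)
      moreover have "0 \<le> \<beta> * ((-d) * (d + \<beta> + 2))" using 3 assms unfolding d_def
        by (intro mult_nonneg_nonneg) auto
      ultimately show ?thesis by linarith
    qed
  qed
  then have "\<beta> * d^2 / (\<beta> + 2) \<le> (sh z - \<beta>) * d"
    using assms by (simp add: pos_divide_le_eq)
  then show ?thesis unfolding d_def[symmetric] shb by simp
qed

lemma sh_monotone_at_support:
  assumes "\<beta> > 0" "\<bar>\<sigma>\<bar> = 1"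
  shows "\<beta> / (\<beta> + 2) * (z - \<sigma> * (1 + \<beta>))^2 \<le> (sh z - sh (\<sigma> * (1 + \<beta>))) * (z - \<sigma> * (1 + \<beta>))"
proof -
  from assms(2) have "\<sigma> = 1 \<or> \<sigma> = -1" by auto
  then show ?thesis
  proof
    assume "\<sigma> = 1" then show ?thesis using sh_monotone_at_positive[OF assms(1)] by simp
  next
    assume s: "\<sigma> = -1"
    have "sh z - sh (\<sigma> * (1 + \<beta>)) = -(sh (-z) - sh (1 + \<beta>))"
      using s sh_odd[of "-z"] sh_odd[of "1 + \<beta>"] by simp
    moreover have "z - \<sigma> * (1 + \<beta>) = -((-z) - (1 + \<beta>))" using s by simp
    ultimately show ?thesis using sh_monotone_at_positive[OF assms(1), of "-z"]
      by (simp only: minus_mult_minus power2_minus)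
  qed
qed

lemma sh_monotone_off_support:
  assumes "\<bar>w\<bar> \<le> 1"
  shows "(max (\<bar>z\<bar> - 1) 0)^2 \<le> (sh z - sh w) * (z - w)"
proof -
  have w: "sh w = 0" using assms by (rule sh_zero)
  consider "z > 1" | "z < -1" | "-1 \<le> z \<and> z \<le> 1" by linarith
  then show ?thesis
  proof cases
    case 1
    then have "(max (\<bar>z\<bar> - 1) 0)^2 = (z - 1) * (z - 1)" by (simp add: power2_eq_square)
    also have "\<dots> \<le> (z - 1) * (z - w)" using 1 assms by (intro mult_left_mono) auto
    finally show ?thesis using w 1 unfolding sh_cases by simp
  next
    case 2
    then have "(max (\<bar>z\<bar> - 1) 0)^2 = (-(z + 1)) * (-(z + 1))" by (simp add: power2_eq_square)
    also have "\<dots> \<le> (-(z + 1)) * (w - z)" using 2 assms by (intro mult_left_mono) auto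
    finally show ?thesis using w 2 unfolding sh_cases by (simp add: algebra_simps)
  next
    case 3 then show ?thesis using w unfolding sh_cases by (simp add: max_def abs_le_iff)
  qed
qed

text \<open>Pointwise inequality behind the optimality of alpha * sh(w) for the primal
  objective |x| + x^2/(2 alpha) perturbed by the linear term -w x.\<close>
lemma sh_primal_optimality:
  fixes \<alpha> w x :: real
  assumes "\<alpha> > 0"
  shows "\<bar>\<alpha> * sh w\<bar> + (\<alpha> * sh w)^2 / (2 * \<alpha>) + w * (x - \<alpha> * sh w) + (x - \<alpha> * sh w)^2 / (2 * \<alpha>)
         \<le> \<bar>x\<bar> + x^2 / (2 * \<alpha>)"
proof -
  let ?p = "\<alpha> * sh w"
  define s where "s = w - sh w"
  have s1: "\<bar>s\<bar> \<le> 1" unfolding s_def using sh_sub[of w] by simp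
  have ps: "\<bar>?p\<bar> = ?p * s"
    unfolding s_def sh_cases using assms by (auto simp: abs_mult)
  have xs: "x * s \<le> \<bar>x\<bar>"
  proof -
    have "x * s \<le> \<bar>x\<bar> * \<bar>s\<bar>" by (metis abs_ge_self abs_mult)
    also have "\<dots> \<le> \<bar>x\<bar>" using s1 by (simp add: mult_left_le)
    finally show ?thesis .
  qed
  have "\<bar>?p\<bar> + ?p^2 / (2 * \<alpha>) + w * (x - ?p) + (x - ?p)^2 / (2 * \<alpha>) = x * s + x^2 / (2 * \<alpha>)"
    unfolding ps s_def using assms by (simp add: power2_eq_square field_simps)
  then show ?thesis using xs by simp
qed

declare transpose_matrix_vector[simp del]

lemma inner_adjoint:
  fixes A :: "real^'n^'m"
  shows "(A *v u) \<bullet> d = u \<bullet> (transpose A *v d)"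
proof -
  have "(A *v u) \<bullet> d = (\<Sum>i\<in>UNIV. \<Sum>j\<in>UNIV. A $ i $ j * u $ j * d $ i)"
    by (simp add: inner_vec_def matrix_vector_mult_def sum_distrib_right sum_distrib_left mult_ac)
  also have "\<dots> = (\<Sum>j\<in>UNIV. \<Sum>i\<in>UNIV. A $ i $ j * u $ j * d $ i)"
    by (rule sum.swap)
  also have "\<dots> = u \<bullet> (transpose A *v d)"
    by (simp add: inner_vec_def matrix_vector_mult_def transpose_def sum_distrib_left mult_ac)
  finally show ?thesis .
qed

lemma transpose_mult_nth: "(transpose A *v u) $ k = column k A \<bullet> u"
  by (simp add: matrix_vector_mult_def transpose_def column_def inner_vec_def mult_ac)

lemma norm_sq_vec: "(norm (x :: real^'k))^2 = (\<Sum>i\<in>UNIV. (x $ i)^2)"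
  unfolding power2_norm_eq_inner inner_vec_def by (simp add: power2_eq_square)

lemma spec_norm_bound:
  fixes A :: "real^'n^'m"
  shows "norm (A *v x) \<le> spec_norm A * norm x"
  unfolding spec_norm_def by (rule onorm) simp

lemma spec_norm_nonneg:
  fixes A :: "real^'n^'m"
  shows "0 \<le> spec_norm A"
  unfolding spec_norm_def by (rule onorm_pos_le) simp

lemma spec_norm_pos:
  fixes A :: "real^'n^'m"
  assumes "A \<noteq> 0"
  shows "0 < spec_norm A"
proof -
  have "\<not> (\<forall>x. A *v x = 0)"
  proof
    assume "\<forall>x. A *v x = 0"
    then have "A = 0" using matrix_eq[of A 0] by simp
    then show False using assms by simp
  qed
  then show ?thesis unfolding spec_norm_def by (subst onorm_pos_lt) simp_all
qed

lemma spec_norm_bound_transpose: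
  fixes A :: "real^'n^'m"
  shows "norm (transpose A *v y) \<le> spec_norm A * norm y"
proof (cases "transpose A *v y = 0")
  case True
  then show ?thesis using spec_norm_nonneg[of A] by simp
next
  case False
  let ?u = "transpose A *v y"
  have "norm ?u * norm ?u = (A *v ?u) \<bullet> y" by (simp add: inner_adjoint flip: power2_norm_eq_inner power2_eq_square)
  also have "\<dots> \<le> norm (A *v ?u) * norm y" by (rule norm_cauchy_schwarz)
  also have "\<dots> \<le> (spec_norm A * norm ?u) * norm y"
    by (intro mult_right_mono spec_norm_bound) simp
  finally have "norm ?u * norm ?u \<le> norm ?u * (spec_norm A * norm y)"
    by (simp add: mult_ac)
  then show ?thesis using False by (simp add: mult_le_cancel_left_pos)
qed

lemma norm_column_le:
  fixes A :: "real^'n^'m"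
  shows "norm (column j A) \<le> spec_norm A"
  using spec_norm_bound[of A "axis j 1"] by (simp add: matrix_vector_mult_basis)

lemma shrink_lip: "norm (shrink a - shrink b) \<le> norm (a - b)"
  by (rule norm_le_componentwise_cart) (simp add: shrink_nth sh_lip)

lemma shrink_cont: "continuous_on X shrink"
proof -
  have "1-lipschitz_on X shrink"
    by (rule lipschitz_onI) (simp_all add: dist_norm shrink_lip)
  then show ?thesis by (rule lipschitz_on_continuous_on)
qed

section \<open>Smoothness and convexity of the dual objective\<close>

lemma dual_f_remainder:
  fixes A :: "real^'n^'m"
  shows "dual_f A b \<alpha> y' - dual_f A b \<alpha> y - dual_grad A b \<alpha> y \<bullet> (y' - y)
     = \<alpha> * (\<Sum>i\<in>UNIV. (sh ((transpose A *v y') $ i))^2 / 2 - (sh ((transpose A *v y) $ i))^2 / 2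
            - sh ((transpose A *v y) $ i) * ((transpose A *v y') $ i - (transpose A *v y) $ i))"
proof -
  let ?w = "transpose A *v y" and ?w' = "transpose A *v y'"
  have g: "dual_grad A b \<alpha> y \<bullet> (y' - y) = - (b \<bullet> (y' - y)) + \<alpha> * (shrink ?w \<bullet> (?w' - ?w))"
    unfolding dual_grad_def
    by (simp add: inner_diff_left inner_add_left inner_adjoint matrix_vector_mult_diff_distrib)
  have s1: "(norm (shrink z))^2 = (\<Sum>i\<in>UNIV. (sh (z $ i))^2)" for z :: "real^'n"
    by (simp add: norm_sq_vec shrink_nth)
  have s2: "shrink ?w \<bullet> (?w' - ?w) = (\<Sum>i\<in>UNIV. sh (?w $ i) * (?w' $ i - ?w $ i))"
    by (simp add: inner_vec_def shrink_nth)
  have s3: "(\<Sum>i\<in>UNIV. (sh (?w' $ i))^2 / 2 - (sh (?w $ i))^2 / 2 - sh (?w $ i) * (?w' $ i - ?w $ i))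
     = (\<Sum>i\<in>UNIV. (sh (?w' $ i))^2) / 2 - (\<Sum>i\<in>UNIV. (sh (?w $ i))^2) / 2
       - (\<Sum>i\<in>UNIV. sh (?w $ i) * (?w' $ i - ?w $ i))"
    by (simp add: sum_subtractf sum_divide_distrib)
  show ?thesis
    unfolding dual_f_def g s1 s2 s3 by (simp add: inner_diff_right algebra_simps)
qed

lemma dual_f_bounds:
  fixes A :: "real^'n^'m"
  assumes "\<alpha> > 0"
  shows "0 \<le> dual_f A b \<alpha> y' - dual_f A b \<alpha> y - dual_grad A b \<alpha> y \<bullet> (y' - y)"
    and "dual_f A b \<alpha> y' - dual_f A b \<alpha> y - dual_grad A b \<alpha> y \<bullet> (y' - y)
          \<le> \<alpha> / 2 * (norm (transpose A *v (y' - y)))^2"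
proof -
  let ?w = "transpose A *v y" and ?w' = "transpose A *v y'"
  let ?t = "\<lambda>i. (sh (?w' $ i))^2 / 2 - (sh (?w $ i))^2 / 2 - sh (?w $ i) * (?w' $ i - ?w $ i)"
  have t0: "0 \<le> ?t i" for i using sh_convex[of "?w $ i" "?w' $ i"] by simp
  have t1: "?t i \<le> (?w' $ i - ?w $ i)^2 / 2" for i using sh_descent[of "?w' $ i" "?w $ i"] by simp
  show "0 \<le> dual_f A b \<alpha> y' - dual_f A b \<alpha> y - dual_grad A b \<alpha> y \<bullet> (y' - y)"
    unfolding dual_f_remainder using assms t0 by (intro mult_nonneg_nonneg sum_nonneg) auto
  have "(\<Sum>i\<in>UNIV. ?t i) \<le> (\<Sum>i\<in>UNIV. (?w' $ i - ?w $ i)^2 / 2)" by (intro sum_mono t1)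
  also have "\<dots> = (norm (transpose A *v (y' - y)))^2 / 2"
    by (simp add: norm_sq_vec sum_divide_distrib matrix_vector_mult_diff_distrib)
  finally show "dual_f A b \<alpha> y' - dual_f A b \<alpha> y - dual_grad A b \<alpha> y \<bullet> (y' - y)
          \<le> \<alpha> / 2 * (norm (transpose A *v (y' - y)))^2"
    unfolding dual_f_remainder using assms by (simp add: mult_left_mono)
qed

lemma dual_grad_diff:
  fixes A :: "real^'n^'m"
  shows "dual_grad A b \<alpha> u - dual_grad A b \<alpha> v
       = \<alpha> *\<^sub>R (A *v (shrink (transpose A *v u) - shrink (transpose A *v v)))"
  unfolding dual_grad_def by (simp add: matrix_vector_mult_diff_distrib scaleR_diff_right)

lemma dual_grad_lipschitz:
  fixes A :: "real^'n^'m"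
  assumes "\<alpha> > 0"
  shows "norm (dual_grad A b \<alpha> u - dual_grad A b \<alpha> v) \<le> \<alpha> * (spec_norm A)^2 * norm (u - v)"
proof -
  have "norm (dual_grad A b \<alpha> u - dual_grad A b \<alpha> v)
     = \<alpha> * norm (A *v (shrink (transpose A *v u) - shrink (transpose A *v v)))"
    using assms by (simp add: dual_grad_diff)
  also have "\<dots> \<le> \<alpha> * (spec_norm A * norm (shrink (transpose A *v u) - shrink (transpose A *v v)))"
    using assms by (intro mult_left_mono spec_norm_bound) simp
  also have "\<dots> \<le> \<alpha> * (spec_norm A * norm (transpose A *v u - transpose A *v v))"
    using assms spec_norm_nonneg[of A] by (intro mult_left_mono shrink_lip) simp_all
  also have "\<dots> \<le> \<alpha> * (spec_norm A * (spec_norm A * norm (u - v)))"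
    using assms spec_norm_nonneg[of A] spec_norm_bound_transpose[of A "u - v"]
    by (intro mult_left_mono) (simp_all add: matrix_vector_mult_diff_distrib)
  finally show ?thesis by (simp add: power2_eq_square mult_ac)
qed

lemma dual_grad_inner:
  fixes A :: "real^'n^'m"
  shows "(dual_grad A b \<alpha> u - dual_grad A b \<alpha> v) \<bullet> (u - v)
     = \<alpha> * (\<Sum>i\<in>UNIV. (sh ((transpose A *v u) $ i) - sh ((transpose A *v v) $ i))
                     * ((transpose A *v u) $ i - (transpose A *v v) $ i))"
proof -
  have "(dual_grad A b \<alpha> u - dual_grad A b \<alpha> v) \<bullet> (u - v)
     = \<alpha> * ((shrink (transpose A *v u) - shrink (transpose A *v v)) \<bullet> (transpose A *v (u - v)))"
    unfolding dual_grad_diff inner_scaleR_left inner_adjoint ..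
  then show ?thesis
    by (simp add: inner_vec_def shrink_nth matrix_vector_mult_diff_distrib)
qed

section \<open>Linear independence and a Farkas lemma\<close>

definition indep_fam :: "('k \<Rightarrow> 'a::real_vector) \<Rightarrow> 'k set \<Rightarrow> bool" where
  "indep_fam g J \<longleftrightarrow> (\<forall>c. (\<Sum>k\<in>J. c k *\<^sub>R g k) = 0 \<longrightarrow> (\<forall>k\<in>J. c k = 0))"

lemma reduce_to_indep:
  fixes g :: "'k \<Rightarrow> 'a::real_vector"
  assumes "finite E"
  shows "\<exists>J d. J \<subseteq> E \<and> indep_fam g J \<and> (\<Sum>k\<in>E. c k *\<^sub>R g k) = (\<Sum>k\<in>J. d k *\<^sub>R g k)"
  using assms
proof (induction E arbitrary: c rule: finite_psubset_induct)
  case (psubset E)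
  show ?case
  proof (cases "indep_fam g E")
    case True then show ?thesis by blast
  next
    case False
    then obtain c0 k0 where c0: "(\<Sum>k\<in>E. c0 k *\<^sub>R g k) = 0" and k0: "k0 \<in> E" "c0 k0 \<noteq> 0"
      unfolding indep_fam_def by blast
    define E' where "E' = E - {k0}"
    have sub: "E' \<subset> E" using k0 unfolding E'_def by blast
    have split: "(\<Sum>k\<in>E. f k) = f k0 + (\<Sum>k\<in>E'. f k)" for f :: "'k \<Rightarrow> 'a"
      using psubset.hyps k0 unfolding E'_def by (simp add: sum.remove)
    have gk0: "g k0 = - (\<Sum>k\<in>E'. (c0 k / c0 k0) *\<^sub>R g k)"
    proof -
      have e: "c0 k0 *\<^sub>R g k0 = - (\<Sum>k\<in>E'. c0 k *\<^sub>R g k)"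
        using c0 split[of "\<lambda>k. c0 k *\<^sub>R g k"] by (simp add: eq_neg_iff_add_eq_0)
      have "g k0 = (1 / c0 k0) *\<^sub>R (c0 k0 *\<^sub>R g k0)" using k0 by simp
      then show ?thesis unfolding e by (simp add: scaleR_sum_right sum_negf)
    qed
    define c' where "c' k = c k - c k0 * (c0 k / c0 k0)" for k
    have "(\<Sum>k\<in>E. c k *\<^sub>R g k) = (\<Sum>k\<in>E'. c' k *\<^sub>R g k)"
    proof -
      have "(\<Sum>k\<in>E. c k *\<^sub>R g k) = c k0 *\<^sub>R g k0 + (\<Sum>k\<in>E'. c k *\<^sub>R g k)"
        using split[of "\<lambda>k. c k *\<^sub>R g k"] by simp
      also have "\<dots> = (\<Sum>k\<in>E'. c k *\<^sub>R g k) - (\<Sum>k\<in>E'. (c k0 * (c0 k / c0 k0)) *\<^sub>R g k)"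
        unfolding gk0 by (simp add: scaleR_sum_right)
      also have "\<dots> = (\<Sum>k\<in>E'. c' k *\<^sub>R g k)"
        unfolding c'_def by (simp add: sum_subtractf scaleR_left_diff_distrib)
      finally show ?thesis .
    qed
    moreover obtain J d where "J \<subseteq> E'" "indep_fam g J" "(\<Sum>k\<in>E'. c' k *\<^sub>R g k) = (\<Sum>k\<in>J. d k *\<^sub>R g k)"
      using psubset.IH[OF sub, of c'] by blast
    ultimately show ?thesis using sub by (intro exI[of _ J] exI[of _ d]) auto
  qed
qed

lemma indep_fam_unsign:
  fixes g :: "'k \<Rightarrow> 'a::real_vector"
  assumes ind: "indep_fam (\<lambda>k. \<sigma> k *\<^sub>R g k) J" and sig: "\<And>k. k \<in> J \<Longrightarrow> \<sigma> k * \<sigma> k = 1"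
  shows "indep_fam g J"
  unfolding indep_fam_def
proof (intro allI impI)
  fix e assume e: "(\<Sum>k\<in>J. e k *\<^sub>R g k) = 0"
  have "(\<Sum>k\<in>J. (e k * \<sigma> k) *\<^sub>R (\<sigma> k *\<^sub>R g k)) = (\<Sum>k\<in>J. e k *\<^sub>R g k)"
    using sig by (intro sum.cong) (auto simp: mult.assoc)
  then have "\<forall>k\<in>J. e k * \<sigma> k = 0"
    using e ind[unfolded indep_fam_def, rule_format, of "\<lambda>k. e k * \<sigma> k"] by simp
  moreover have "e k = (e k * \<sigma> k) * \<sigma> k" if "k \<in> J" for k
    using sig[OF that] by (simp add: mult.assoc)
  ultimately show "\<forall>k\<in>J. e k = 0" by (metis mult_zero_left)
qed

lemma span_of_orthogonal_complement:
  fixes g :: "'k \<Rightarrow> 'a::euclidean_space"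
  assumes "finite E" and H: "\<And>w. (\<forall>k\<in>E. g k \<bullet> w = 0) \<Longrightarrow> v \<bullet> w \<le> 0"
  shows "\<exists>c. v = (\<Sum>k\<in>E. c k *\<^sub>R g k)"
proof -
  define W where "W = range (\<lambda>c. \<Sum>k\<in>E. c k *\<^sub>R g k)"
  have sW: "subspace W"
  proof (rule subspaceI)
    show "0 \<in> W" unfolding W_def by (rule range_eqI[of _ _ "\<lambda>_. 0"]) simp
  next
    fix x y assume "x \<in> W" "y \<in> W"
    then obtain a b where "x = (\<Sum>k\<in>E. a k *\<^sub>R g k)" "y = (\<Sum>k\<in>E. b k *\<^sub>R g k)"
      unfolding W_def by blast
    then show "x + y \<in> W" unfolding W_def
      by (intro range_eqI[of _ _ "\<lambda>k. a k + b k"]) (simp add: sum.distrib scaleR_add_left)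
  next
    fix r :: real and x assume "x \<in> W"
    then obtain a where "x = (\<Sum>k\<in>E. a k *\<^sub>R g k)" unfolding W_def by blast
    then show "r *\<^sub>R x \<in> W" unfolding W_def
      by (intro range_eqI[of _ _ "\<lambda>k. r * a k"]) (simp add: scaleR_sum_right)
  qed
  have gW: "g k \<in> W" if "k \<in> E" for k
  proof -
    have "(\<Sum>j\<in>E. (if j = k then 1 else 0) *\<^sub>R g j) = (\<Sum>j\<in>E. if j = k then g j else 0)"
      by (rule sum.cong) auto
    also have "\<dots> = g k" using that assms(1) by simp
    finally have eq: "(\<Sum>j\<in>E. (if j = k then 1 else 0) *\<^sub>R g j) = g k" .
    show ?thesis unfolding W_def
      by (rule range_eqI[of _ _ "\<lambda>j. if j = k then 1 else 0"]) (simp only: eq)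
  qed
  obtain p q where p: "p \<in> span W" and q: "\<And>w. w \<in> span W \<Longrightarrow> orthogonal q w" and v: "v = p + q"
    using orthogonal_subspace_decomp_exists by blast
  have gq: "\<forall>k\<in>E. g k \<bullet> q = 0"
    using q gW span_base by (fastforce simp: orthogonal_def inner_commute)
  have "v \<bullet> q \<le> 0" using H[OF gq] .
  moreover have "p \<bullet> q = 0" using q[OF p] by (simp add: orthogonal_def inner_commute)
  ultimately have "q \<bullet> q \<le> 0" using v by (simp add: inner_add_left)
  then have "q = 0" by (metis inner_ge_zero inner_eq_zero_iff order_antisym)
  then have "v \<in> W" using v p sW by (metis add.right_neutral span_eq_iff)
  then show ?thesis unfolding W_def by blast
qed

text \<open>Sign step of the Farkas induction: if w0 separates v from the cone of the
  remaining generators, the coefficient of the separating generator g t cannot be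
  negative.\<close>
lemma coefficient_sign_from_separation:
  fixes g :: "'k \<Rightarrow> 'a::real_inner"
  assumes "finite J" "t \<in> J" "v = (\<Sum>k\<in>J. c k *\<^sub>R g k)"
    and "v \<bullet> w0 > 0" "g t \<bullet> w0 > 0" "\<And>k. k \<in> J - {t} \<Longrightarrow> c k * (g k \<bullet> w0) \<le> 0"
  shows "c t \<ge> 0"
proof (rule ccontr)
  assume "\<not> c t \<ge> 0"
  have "v \<bullet> w0 = (\<Sum>k\<in>J. c k * (g k \<bullet> w0))" using assms(3) by (simp add: inner_sum_left)
  also have "\<dots> = c t * (g t \<bullet> w0) + (\<Sum>k\<in>J - {t}. c k * (g k \<bullet> w0))"
    using assms(1,2) by (simp add: sum.remove)
  also have "\<dots> \<le> c t * (g t \<bullet> w0)" using sum_nonpos[of "J - {t}", OF assms(6)] by simp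
  also have "\<dots> < 0" using \<open>\<not> c t \<ge> 0\<close> assms(5) by (simp add: mult_neg_pos)
  finally show False using assms(4) by simp
qed

lemma farkas_indep:
  fixes g :: "'k \<Rightarrow> 'a::euclidean_space"
  assumes "finite I" "finite E" "E \<inter> I = {}"
    and "\<And>w. (\<forall>k\<in>E. g k \<bullet> w = 0) \<Longrightarrow> (\<forall>k\<in>I. g k \<bullet> w \<le> 0) \<Longrightarrow> v \<bullet> w \<le> 0"
  shows "\<exists>J c. J \<subseteq> E \<union> I \<and> indep_fam g J \<and> v = (\<Sum>k\<in>J. c k *\<^sub>R g k) \<and> (\<forall>k\<in>J \<inter> I. c k \<ge> 0)"
  using assms
proof (induction I arbitrary: E rule: finite_induct)
  case empty
  then obtain c where "v = (\<Sum>k\<in>E. c k *\<^sub>R g k)" using span_of_orthogonal_complement[of E g v] by auto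
  then show ?case using reduce_to_indep[OF empty.prems(1), of g c] by auto
next
  case (insert t F)
  show ?case
  proof (cases "\<forall>w. (\<forall>k\<in>E. g k \<bullet> w = 0) \<longrightarrow> (\<forall>k\<in>F. g k \<bullet> w \<le> 0) \<longrightarrow> v \<bullet> w \<le> 0")
    case True
    text \<open>The constraint g t is redundant.\<close>
    have "E \<inter> F = {}" using insert.prems(2) by auto
    then obtain J c where "J \<subseteq> E \<union> F" "indep_fam g J" "v = (\<Sum>k\<in>J. c k *\<^sub>R g k)" "\<forall>k\<in>J \<inter> F. c k \<ge> 0"
      using insert.IH[OF insert.prems(1)] True by blast
    moreover have "J \<inter> insert t F \<subseteq> J \<inter> F"
      using \<open>J \<subseteq> E \<union> F\<close> insert.prems(2) insert.hyps(2) by auto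
    ultimately show ?thesis by (intro exI[of _ J] exI[of _ c]) auto
  next
    case False
    text \<open>Some w0 violates only the constraint g t; then g t may be treated as an
      equality constraint, and the separation by w0 fixes the sign of its coefficient.\<close>
    then obtain w0 where w0E: "\<forall>k\<in>E. g k \<bullet> w0 = 0" and w0F: "\<forall>k\<in>F. g k \<bullet> w0 \<le> 0"
      and vw0: "v \<bullet> w0 > 0"
      by force
    have gt: "g t \<bullet> w0 > 0"
      using insert.prems(3)[of w0] w0E w0F vw0 by force
    have H': "v \<bullet> w \<le> 0" if "\<forall>k\<in>insert t E. g k \<bullet> w = 0" "\<forall>k\<in>F. g k \<bullet> w \<le> 0" for w
      using insert.prems(3)[of w] that by auto
    have "insert t E \<inter> F = {}" using insert.prems(2) insert.hyps(2) by auto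
    then obtain J c where J: "J \<subseteq> insert t E \<union> F" "indep_fam g J" "v = (\<Sum>k\<in>J. c k *\<^sub>R g k)"
      "\<forall>k\<in>J \<inter> F. c k \<ge> 0"
      using insert.IH[OF _ _ H'] insert.prems(1) by blast
    have "c t \<ge> 0" if "t \<in> J"
    proof (rule coefficient_sign_from_separation[OF _ that J(3) vw0 gt])
      show "finite J" using J(1) insert.prems(1) insert.hyps(1) finite_subset by blast
      show "c k * (g k \<bullet> w0) \<le> 0" if "k \<in> J - {t}" for k
      proof -
        have "k \<in> E \<or> k \<in> F" using that J(1) by auto
        then show ?thesis using that J(4) w0E w0F by (auto intro: mult_nonneg_nonpos)
      qed
    qed
    then show ?thesis
      using J insert.prems(2) by (intro exI[of _ J] exI[of _ c]) auto
  qed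
qed

section \<open>The constant lambda_A and a Rayleigh quotient bound\<close>

lemma colsub_gram_symmetric: "transpose (colsub_gram A S) = colsub_gram A S"
  by (simp add: transpose_def vec_eq_iff colsub_gram_def mult.commute)

text \<open>A symmetric matrix has only finitely many eigenvalues: eigenvectors for
  distinct eigenvalues are orthogonal, hence linearly independent.\<close>
lemma symmetric_finite_eigenvalues:
  fixes M :: "real^'m^'m"
  assumes sym: "transpose M = M"
  shows "finite {l. is_eigenvalue M l}"
proof -
  define E where "E = {l. is_eigenvalue M l}"
  define v where "v l = (SOME v. v \<noteq> 0 \<and> M *v v = l *\<^sub>R v)" for l
  have vl: "v l \<noteq> 0 \<and> M *v v l = l *\<^sub>R v l" if "l \<in> E" for l
  proof -
    have "\<exists>v. v \<noteq> 0 \<and> M *v v = l *\<^sub>R v" using that unfolding E_def is_eigenvalue_def by simp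
    then show ?thesis unfolding v_def by (rule someI_ex)
  qed
  have orth: "v l1 \<bullet> v l2 = 0" if "l1 \<in> E" "l2 \<in> E" "l1 \<noteq> l2" for l1 l2
  proof -
    have "l1 * (v l1 \<bullet> v l2) = (M *v v l1) \<bullet> v l2" using vl[OF that(1)] by simp
    also have "\<dots> = v l1 \<bullet> (transpose M *v v l2)" by (rule inner_adjoint)
    also have "\<dots> = l2 * (v l1 \<bullet> v l2)" using vl[OF that(2)] sym by simp
    finally have "(l1 - l2) * (v l1 \<bullet> v l2) = 0" by (simp add: left_diff_distrib)
    then show ?thesis using that(3) by simp
  qed
  have inj: "inj_on v E"
  proof (rule inj_onI)
    fix l1 l2 assume "l1 \<in> E" "l2 \<in> E" "v l1 = v l2"
    then show "l1 = l2" using orth[of l1 l2] vl[of l1] by force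
  qed
  have "pairwise orthogonal (v ` E)"
    unfolding pairwise_def orthogonal_def using orth by (metis imageE)
  moreover have "0 \<notin> v ` E" using vl by auto
  ultimately have "independent (v ` E)" by (rule pairwise_orthogonal_independent)
  then have "finite (v ` E)" using independent_bound by blast
  then show ?thesis using inj finite_imageD unfolding E_def by blast
qed

definition gram_pos_eigs :: "real^'n^'m \<Rightarrow> real set" where
  "gram_pos_eigs A = {l. \<exists>S. (\<exists>j\<in>S. column j A \<noteq> 0) \<and> 0 < l \<and> is_eigenvalue (colsub_gram A S) l}"

lemma lambdaA_eq_Min: "lambdaA A = Min (gram_pos_eigs A)"
  unfolding lambdaA_def gram_pos_eigs_def ..

lemma gram_pos_eigs_finite: "finite (gram_pos_eigs (A :: real^'n^'m))"
proof (rule finite_subset)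
  show "gram_pos_eigs A \<subseteq> (\<Union>S. {l. is_eigenvalue (colsub_gram A S) l})"
    unfolding gram_pos_eigs_def by blast
  show "finite (\<Union>S. {l. is_eigenvalue (colsub_gram A S) l})"
    by (intro finite_UN_I finite symmetric_finite_eigenvalues colsub_gram_symmetric)
qed

lemma lambdaA_le:
  assumes "l \<in> gram_pos_eigs A"
  shows "lambdaA A \<le> l"
  unfolding lambdaA_eq_Min using gram_pos_eigs_finite assms by (rule Min_le)

lemma column_norm_in_gram_pos_eigs:
  fixes A :: "real^'n^'m"
  assumes "column j A \<noteq> 0"
  shows "(norm (column j A))^2 \<in> gram_pos_eigs A"
proof -
  let ?a = "column j A"
  have "colsub_gram A {j} *v ?a = (?a \<bullet> ?a) *\<^sub>R ?a"
    by (simp add: vec_eq_iff colsub_gram_def matrix_vector_mult_def column_def inner_vec_def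
        sum_distrib_left mult_ac)
  then have "is_eigenvalue (colsub_gram A {j}) ((norm ?a)^2)"
    unfolding is_eigenvalue_def power2_norm_eq_inner using assms by blast
  then show ?thesis unfolding gram_pos_eigs_def using assms by auto
qed

lemma lambdaA_pos_le:
  fixes A :: "real^'n^'m"
  assumes "A \<noteq> 0"
  shows "0 < lambdaA A" "lambdaA A \<le> (spec_norm A)^2"
proof -
  have "\<exists>j. column j A \<noteq> 0"
  proof (rule ccontr)
    assume "\<nexists>j. column j A \<noteq> 0"
    then have "A = 0" by (simp add: vec_eq_iff column_def)
    then show False using assms by simp
  qed
  then obtain j where j: "column j A \<noteq> 0" by blast
  then have ne: "gram_pos_eigs A \<noteq> {}" using column_norm_in_gram_pos_eigs by blast
  have "lambdaA A \<in> gram_pos_eigs A"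
    unfolding lambdaA_eq_Min using gram_pos_eigs_finite ne by (rule Min_in)
  then show "0 < lambdaA A" unfolding gram_pos_eigs_def by blast
  have "lambdaA A \<le> (norm (column j A))^2" by (rule lambdaA_le[OF column_norm_in_gram_pos_eigs[OF j]])
  also have "\<dots> \<le> (spec_norm A)^2" by (intro power_mono norm_column_le) simp
  finally show "lambdaA A \<le> (spec_norm A)^2" .
qed

definition coeff_space :: "'n set \<Rightarrow> (real^'n) set" where
  "coeff_space J = {c. \<forall>k. k \<notin> J \<longrightarrow> c $ k = 0}"

definition colcomb :: "real^'n^'m \<Rightarrow> 'n set \<Rightarrow> real^'n \<Rightarrow> real^'m" where
  "colcomb A J c = (\<Sum>k\<in>J. (c $ k) *\<^sub>R column k A)"

lemma colcomb_scaleR: "colcomb A J (r *\<^sub>R c) = r *\<^sub>R colcomb A J c"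
  by (simp add: colcomb_def scaleR_sum_right)

lemma colcomb_add_axis:
  assumes "j \<in> J"
  shows "colcomb A J (c + t *\<^sub>R axis j 1) = colcomb A J c + t *\<^sub>R column j A"
proof -
  have "(\<Sum>k\<in>J. (t * axis j 1 $ k) *\<^sub>R column k A) = (\<Sum>k\<in>J. if k = j then t *\<^sub>R column k A else 0)"
    by (rule sum.cong) (auto simp: axis_def)
  also have "\<dots> = t *\<^sub>R column j A" using assms by simp
  finally show ?thesis by (simp add: colcomb_def scaleR_add_left sum.distrib)
qed

lemma nonneg_quadratic_linear_term:
  fixes p r :: real
  assumes "\<And>t. 0 \<le> p * t + r * t^2"
  shows "p = 0"
proof (rule ccontr)
  assume p: "p \<noteq> 0"
  define R where "R = \<bar>r\<bar> + 1"
  have R: "R > 0" "r \<le> R" unfolding R_def by auto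
  define t where "t = - p / (2 * R)"
  have "r * t^2 \<le> R * t^2" using R by (intro mult_right_mono) auto
  moreover have "R * t^2 = p^2 / (4 * R)" "p * t = -(p^2) / (2 * R)"
    unfolding t_def using R by (simp_all add: power2_eq_square field_simps)
  ultimately have "p * t + r * t^2 \<le> -(p^2) / (4 * R)" by (simp add: field_simps)
  also have "\<dots> < 0" using p R by (simp add: divide_pos_pos)
  finally show False using assms[of t] by simp
qed

text \<open>First-order condition at a minimiser c0 of the Rayleigh quotient
  |colcomb c|^2 / |c|^2 on the coefficient space: the column a_j is correlated with
  u = colcomb c0 exactly by mu c0_j.\<close>
lemma rayleigh_minimiser_stationary:
  fixes A :: "real^'n^'m"
  assumes min: "\<And>c. c \<in> coeff_space J \<Longrightarrow> \<mu> * (norm c)^2 \<le> (norm (colcomb A J c))^2"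
    and c0: "c0 \<in> coeff_space J" "norm c0 = 1" "\<mu> = (norm (colcomb A J c0))^2"
    and j: "j \<in> J"
  shows "column j A \<bullet> colcomb A J c0 = \<mu> * c0 $ j"
proof -
  let ?a = "column j A" and ?u = "colcomb A J c0"
  have "0 \<le> (2 * (?a \<bullet> ?u) - 2 * \<mu> * c0 $ j) * t + ((norm ?a)^2 - \<mu>) * t^2" for t
  proof -
    let ?c = "c0 + t *\<^sub>R axis j 1"
    have "?c \<in> coeff_space J" using c0(1) j by (auto simp: coeff_space_def axis_def)
    then have "\<mu> * (norm ?c)^2 \<le> (norm (colcomb A J ?c))^2" by (rule min)
    also have "colcomb A J ?c = ?u + t *\<^sub>R ?a" by (rule colcomb_add_axis[OF j])
    finally have "\<mu> * (norm ?c)^2 \<le> (norm (?u + t *\<^sub>R ?a))^2" .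
    moreover have "(norm ?c)^2 = 1 + 2 * t * c0 $ j + t^2"
      using c0(2) power2_norm_eq_inner[of c0] unfolding power2_norm_eq_inner[of ?c]
      by (simp add: inner_add_left inner_add_right inner_axis inner_commute power2_eq_square algebra_simps)
    moreover have "(norm (?u + t *\<^sub>R ?a))^2 = \<mu> + 2 * t * (?a \<bullet> ?u) + t^2 * (norm ?a)^2"
      unfolding c0(3) power2_norm_eq_inner
      by (simp add: inner_add_left inner_add_right inner_commute power2_eq_square algebra_simps)
    ultimately show ?thesis by (simp add: algebra_simps)
  qed
  then have "2 * (?a \<bullet> ?u) - 2 * \<mu> * c0 $ j = 0"
    by (rule nonneg_quadratic_linear_term)
  then show ?thesis by simp
qed

lemma colsub_gram_eigenvector:
  fixes A :: "real^'n^'m"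
  assumes "\<And>j. j \<in> J \<Longrightarrow> column j A \<bullet> colcomb A J c = \<mu> * c $ j"
  shows "colsub_gram A J *v colcomb A J c = \<mu> *\<^sub>R colcomb A J c"
proof -
  have "(colsub_gram A J *v colcomb A J c) $ i = (\<mu> *\<^sub>R colcomb A J c) $ i" for i
  proof -
    have "(colsub_gram A J *v colcomb A J c) $ i
        = (\<Sum>l\<in>UNIV. \<Sum>j\<in>J. A $ i $ j * (A $ l $ j * colcomb A J c $ l))"
      by (simp add: matrix_vector_mult_def colsub_gram_def sum_distrib_right sum_distrib_left mult_ac)
    also have "\<dots> = (\<Sum>j\<in>J. A $ i $ j * (column j A \<bullet> colcomb A J c))"
      by (subst sum.swap) (simp add: inner_vec_def column_def sum_distrib_left)
    also have "\<dots> = (\<Sum>j\<in>J. A $ i $ j * (\<mu> * c $ j))"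
      by (rule sum.cong) (simp_all add: assms)
    also have "\<dots> = \<mu> * colcomb A J c $ i"
      by (simp add: colcomb_def column_def sum_distrib_left mult_ac)
    finally show ?thesis by simp
  qed
  then show ?thesis by (simp add: vec_eq_iff)
qed

text \<open>The Rayleigh quotient |colcomb c|^2 / |c|^2 attains its minimum on the
  coefficient space: minimise over the compact unit sphere and use homogeneity.\<close>
lemma rayleigh_minimiser_exists:
  fixes A :: "real^'n^'m"
  assumes J: "J \<noteq> {}"
  obtains c0 where "c0 \<in> coeff_space J" "norm c0 = 1"
    "\<And>c. c \<in> coeff_space J \<Longrightarrow> (norm (colcomb A J c0))^2 * (norm c)^2 \<le> (norm (colcomb A J c))^2"
proof -
  define q where "q c = (norm (colcomb A J c))^2" for c
  define K where "K = sphere 0 1 \<inter> coeff_space J"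
  have sZ: "subspace (coeff_space J)"
    by (rule subspaceI) (auto simp: coeff_space_def)
  obtain j0 where "j0 \<in> J" using J by blast
  then have "\<forall>k. k \<notin> J \<longrightarrow> axis j0 (1::real) $ k = 0" by (auto simp: axis_def)
  then have "axis j0 1 \<in> K" unfolding K_def coeff_space_def by simp
  moreover have "compact K" unfolding K_def
    by (intro compact_Int_closed compact_sphere closed_subspace sZ)
  moreover have "continuous_on K q" unfolding q_def colcomb_def by (intro continuous_intros)
  ultimately obtain c0 where c0K: "c0 \<in> K" and c0min: "\<And>c. c \<in> K \<Longrightarrow> q c0 \<le> q c"
    using continuous_attains_inf[of K q] by blast
  have "q c0 * (norm c)^2 \<le> q c" if "c \<in> coeff_space J" for c
  proof (cases "c = 0")
    case True then show ?thesis by (simp add: q_def)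
  next
    case False
    define s where "s = norm c"
    have s: "s > 0" using False unfolding s_def by simp
    have "(1 / s) *\<^sub>R c \<in> K" unfolding K_def using that s sZ
      by (auto simp: s_def subspace_scale)
    then have "q c0 \<le> q ((1 / s) *\<^sub>R c)" by (rule c0min)
    also have "\<dots> = q c / s^2" by (simp add: q_def colcomb_scaleR power2_eq_square)
    finally show ?thesis using s unfolding s_def[symmetric] by (simp add: pos_le_divide_eq)
  qed
  then show ?thesis using that c0K unfolding K_def q_def by auto
qed

text \<open>Rayleigh bound: on a linearly independent set of columns,
  |sum c_k a_k|^2 >= lambda_A sum c_k^2.  The minimum mu of the Rayleigh quotient is
  a positive eigenvalue of C C^T, so lambda_A <= mu.\<close>
lemma rayleigh_bound:
  fixes A :: "real^'n^'m"
  assumes J: "J \<noteq> {}" and ind: "indep_fam (\<lambda>k. column k A) J"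
  shows "lambdaA A * (\<Sum>k\<in>J. (c k)^2) \<le> (norm (\<Sum>k\<in>J. c k *\<^sub>R column k A))^2"
proof -
  obtain c0 where c0Z: "c0 \<in> coeff_space J" and nc0: "norm c0 = 1"
    and quot: "\<And>c. c \<in> coeff_space J \<Longrightarrow> (norm (colcomb A J c0))^2 * (norm c)^2 \<le> (norm (colcomb A J c))^2"
    using rayleigh_minimiser_exists[OF J] by blast
  define u where "u = colcomb A J c0"
  define \<mu> where "\<mu> = (norm u)^2"
  have u0: "u \<noteq> 0"
  proof
    assume "u = 0"
    then have "\<forall>k\<in>J. c0 $ k = 0" using ind unfolding indep_fam_def u_def colcomb_def by blast
    then have "c0 = 0" using c0Z unfolding coeff_space_def by (auto simp: vec_eq_iff)
    then show False using nc0 by simp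
  qed
  have "colsub_gram A J *v u = \<mu> *\<^sub>R u" unfolding u_def \<mu>_def
    by (intro colsub_gram_eigenvector rayleigh_minimiser_stationary[OF _ c0Z nc0])
      (use quot in \<open>simp_all add: u_def\<close>)
  moreover have "\<exists>j\<in>J. column j A \<noteq> 0"
  proof (rule ccontr)
    assume "\<not> (\<exists>j\<in>J. column j A \<noteq> 0)"
    then have "u = 0" by (simp add: u_def colcomb_def)
    then show False using u0 by simp
  qed
  moreover have "\<mu> > 0" using u0 by (simp add: \<mu>_def)
  ultimately have "\<mu> \<in> gram_pos_eigs A" unfolding gram_pos_eigs_def is_eigenvalue_def using u0 by blast
  then have lam: "lambdaA A \<le> \<mu>" by (rule lambdaA_le)
  define cv where "cv = (\<chi> k. if k \<in> J then c k else 0)"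
  have cvZ: "cv \<in> coeff_space J" unfolding cv_def coeff_space_def by simp
  have "(norm cv)^2 = (\<Sum>k\<in>UNIV. if k \<in> J then (c k)^2 else 0)"
    unfolding norm_sq_vec by (rule sum.cong) (auto simp: cv_def)
  also have "\<dots> = (\<Sum>k\<in>J. (c k)^2)" by (simp add: sum.If_cases)
  finally have "(norm cv)^2 = (\<Sum>k\<in>J. (c k)^2)" .
  moreover have "colcomb A J cv = (\<Sum>k\<in>J. c k *\<^sub>R column k A)"
    unfolding colcomb_def by (rule sum.cong) (auto simp: cv_def)
  moreover have "lambdaA A * (norm cv)^2 \<le> \<mu> * (norm cv)^2" using lam by (intro mult_right_mono) auto
  ultimately show ?thesis using quot[OF cvZ] by (simp add: \<mu>_def u_def)
qed

section \<open>The dual solution set Y*\<close>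

lemma rbp_obj_sum: "rbp_obj \<alpha> x = (\<Sum>i\<in>UNIV. \<bar>x $ i\<bar> + (x $ i)^2 / (2 * \<alpha>))"
  unfolding rbp_obj_def l1norm_def norm_sq_vec
  by (simp add: sum.distrib sum_divide_distrib)

lemma primal_quadratic_growth:
  assumes "\<alpha> > 0"
  shows "rbp_obj \<alpha> (\<alpha> *\<^sub>R shrink w) + w \<bullet> (x - \<alpha> *\<^sub>R shrink w) + (norm (x - \<alpha> *\<^sub>R shrink w))^2 / (2 * \<alpha>)
         \<le> rbp_obj \<alpha> x"
proof -
  have "rbp_obj \<alpha> (\<alpha> *\<^sub>R shrink w) + w \<bullet> (x - \<alpha> *\<^sub>R shrink w) + (norm (x - \<alpha> *\<^sub>R shrink w))^2 / (2 * \<alpha>)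
     = (\<Sum>i\<in>UNIV. \<bar>\<alpha> * sh (w $ i)\<bar> + (\<alpha> * sh (w $ i))^2 / (2 * \<alpha>) + w $ i * (x $ i - \<alpha> * sh (w $ i))
            + (x $ i - \<alpha> * sh (w $ i))^2 / (2 * \<alpha>))"
    unfolding rbp_obj_sum norm_sq_vec
    by (simp add: inner_vec_def shrink_nth sum.distrib sum_divide_distrib)
  also have "\<dots> \<le> (\<Sum>i\<in>UNIV. \<bar>x $ i\<bar> + (x $ i)^2 / (2 * \<alpha>))"
    by (intro sum_mono sh_primal_optimality assms)
  finally show ?thesis unfolding rbp_obj_sum .
qed

lemma shrink_norm_lower:
  "norm (w :: real^'n) - norm (\<chi> (i::'n). (1::real)) \<le> norm (shrink w)"
proof -
  have "norm (w - shrink w) \<le> norm (\<chi> (i::'n). (1::real))"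
    by (rule norm_le_componentwise_cart) (simp add: shrink_nth, metis abs_minus_commute sh_sub)
  then show ?thesis using norm_triangle_ineq2[of w "shrink w"] by (simp add: norm_minus_commute)
qed

lemma linear_below_quadratic:
  fixes \<alpha> Z N s :: real
  assumes "\<alpha> > 0" "Z \<ge> 0" "N \<ge> 0" "s > N + (2 * Z * (N + 1) / \<alpha> + 1)" "ns \<ge> s - N"
  shows "Z * s < \<alpha> / 2 * ns^2"
proof -
  define D where "D = 2 * Z * (N + 1) / \<alpha> + 1"
  define d where "d = s - N"
  have dD: "d > D" using assms(4) unfolding d_def D_def by simp
  have D1: "D \<ge> 1" unfolding D_def using assms by simp
  have d1: "d \<ge> 1" using dD D1 by auto
  have hD: "\<alpha> / 2 * (D - 1) = Z * (N + 1)" unfolding D_def using assms by (simp add: field_simps)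
  have "Z * s = Z * d + Z * N" unfolding d_def by (simp add: algebra_simps)
  also have "\<dots> \<le> Z * d + Z * d * N"
    using mult_right_mono[OF mult_left_mono[OF d1 assms(2)] assms(3)] by simp
  also have "\<dots> = d * (\<alpha> / 2 * (D - 1))" unfolding hD by (simp add: algebra_simps)
  also have "\<dots> < d * (\<alpha> / 2 * d)" using d1 dD assms by (intro mult_strict_left_mono) auto
  also have "\<dots> = \<alpha> / 2 * d^2" by (simp add: power2_eq_square)
  also have "\<dots> \<le> \<alpha> / 2 * ns^2" using assms d1 unfolding d_def by (intro mult_left_mono power_mono) auto
  finally show ?thesis .
qed

text \<open>f attains its minimum: f(y) = phi(A^T y) with phi coercive, so a minimiser of
  phi on a large ball of the closed subspace range(A^T) is a global minimiser.\<close>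
lemma dual_f_attains_min:
  fixes A :: "real^'n^'m"
  assumes a: "\<alpha> > 0" and z0: "A *v z0 = b"
  shows "\<exists>ym. \<forall>y. dual_f A b \<alpha> ym \<le> dual_f A b \<alpha> y"
proof -
  define \<phi> where "\<phi> w = -(z0 \<bullet> w) + \<alpha> / 2 * (norm (shrink w))^2" for w :: "real^'n"
  have f\<phi>: "dual_f A b \<alpha> y = \<phi> (transpose A *v y)" for y
    unfolding dual_f_def \<phi>_def z0[symmetric] inner_adjoint ..
  define W where "W = range (\<lambda>y. transpose A *v y)"
  have "subspace W" unfolding W_def
    by (rule linear_subspace_image) (simp_all add: matrix_vector_mul_linear)
  then have cW: "closed W" by (rule closed_subspace)
  define N where "N = norm (\<chi> (i::'n). (1::real))"
  define Z where "Z = norm z0"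
  define R where "R = N + (2 * Z * (N + 1) / \<alpha> + 1)"
  have N0: "N \<ge> 0" and Z0: "Z \<ge> 0" unfolding N_def Z_def by simp_all
  define C where "C = cball 0 R \<inter> W"
  have "0 \<in> C" unfolding C_def R_def using N0 Z0 a \<open>subspace W\<close> by (simp add: subspace_0)
  moreover have "compact C" unfolding C_def by (intro compact_Int_closed compact_cball cW)
  moreover have "continuous_on C \<phi>" unfolding \<phi>_def by (intro continuous_intros shrink_cont)
  ultimately obtain wm where wmC: "wm \<in> C" and wmin: "\<And>w. w \<in> C \<Longrightarrow> \<phi> wm \<le> \<phi> w"
    using continuous_attains_inf[of C \<phi>] by blast
  have "shrink 0 = (0::real^'n)" by (simp add: vec_eq_iff shrink_nth sh_cases)
  then have "\<phi> wm \<le> 0" using wmin[OF \<open>0 \<in> C\<close>] unfolding \<phi>_def by simp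
  have glob: "\<phi> wm \<le> \<phi> w" if "w \<in> W" for w
  proof (cases "norm w \<le> R")
    case True then show ?thesis using that by (intro wmin) (simp add: C_def)
  next
    case False
    have "Z * norm w < \<alpha> / 2 * (norm (shrink w))^2"
      using a Z0 N0 False shrink_norm_lower[of w]
      by (intro linear_below_quadratic[where N = N]) (auto simp: R_def N_def)
    moreover have "z0 \<bullet> w \<le> Z * norm w" unfolding Z_def by (rule norm_cauchy_schwarz)
    ultimately show ?thesis using \<open>\<phi> wm \<le> 0\<close> unfolding \<phi>_def by simp
  qed
  obtain ym where ym: "wm = transpose A *v ym" using wmC unfolding C_def W_def by blast
  have "dual_f A b \<alpha> ym \<le> dual_f A b \<alpha> y" for y
    unfolding f\<phi> ym[symmetric] by (rule glob) (simp add: W_def)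
  then show ?thesis by blast
qed

text \<open>A minimiser of f is stationary: a small gradient step would decrease f by the
  descent lemma.\<close>
lemma dual_min_stationary:
  fixes A :: "real^'n^'m"
  assumes a: "\<alpha> > 0" and fmin: "\<And>y. dual_f A b \<alpha> ym \<le> dual_f A b \<alpha> y"
  shows "dual_grad A b \<alpha> ym = 0"
proof -
  define g where "g = dual_grad A b \<alpha> ym"
  define K where "K = \<alpha> * (spec_norm A)^2"
  have K0: "K \<ge> 0" unfolding K_def using a by simp
  define t where "t = 1 / (K + 1)"
  have t0: "t > 0" and Kt: "K * t \<le> 1" unfolding t_def using K0 by (simp_all add: field_simps)
  let ?y' = "ym - t *\<^sub>R g"
  have "dual_f A b \<alpha> ?y' - dual_f A b \<alpha> ym - g \<bullet> (?y' - ym) \<le> \<alpha> / 2 * (norm (transpose A *v (?y' - ym)))^2"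
    unfolding g_def by (rule dual_f_bounds(2)[OF a])
  moreover have "g \<bullet> (?y' - ym) = - t * (norm g)^2" by (simp add: power2_norm_eq_inner)
  moreover have "\<alpha> / 2 * (norm (transpose A *v (?y' - ym)))^2 \<le> \<alpha> / 2 * (spec_norm A * (t * norm g))^2"
  proof -
    have "norm (transpose A *v (?y' - ym)) \<le> spec_norm A * (t * norm g)"
      using spec_norm_bound_transpose[of A "?y' - ym"] t0 by simp
    then show ?thesis using a by (intro mult_left_mono power_mono) simp_all
  qed
  moreover have "\<alpha> / 2 * (spec_norm A * (t * norm g))^2 = (K * t) * (t * (norm g)^2) / 2"
    unfolding K_def by (simp add: power2_eq_square)
  moreover have "(K * t) * (t * (norm g)^2) \<le> t * (norm g)^2"
    using Kt t0 K0 by (intro mult_left_le_one_le) auto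
  ultimately have "t * (norm g)^2 \<le> 0" using fmin[of ?y'] by linarith
  then show ?thesis using t0 unfolding g_def by (simp add: mult_le_0_iff)
qed

text \<open>A stationary point of f is a dual solution: x = alpha shrink(A^T y) is then
  feasible, and quadratic growth at x together with optimality of x* forces x = x*.\<close>
lemma stationary_in_Ystar:
  fixes A :: "real^'n^'m"
  assumes a: "\<alpha> > 0" and sol: "is_rbp_solution A b \<alpha> xs"
    and g0: "dual_grad A b \<alpha> ym = 0"
  shows "ym \<in> Ystar A \<alpha> xs"
proof -
  define xh where "xh = \<alpha> *\<^sub>R shrink (transpose A *v ym)"
  have Axh: "A *v xh = b" using g0 unfolding dual_grad_def xh_def
    by (simp add: matrix_vector_mult_scaleR)
  have Axs: "A *v xs = b" and opt: "rbp_obj \<alpha> xs \<le> rbp_obj \<alpha> xh"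
    using sol Axh unfolding is_rbp_solution_def by auto
  have "(transpose A *v ym) \<bullet> (xs - xh) = (A *v (xs - xh)) \<bullet> ym"
    using inner_adjoint[of A "xs - xh" ym] by (simp add: inner_commute)
  also have "\<dots> = 0" using Axs Axh by (simp add: matrix_vector_mult_diff_distrib)
  finally have "rbp_obj \<alpha> xh + (norm (xs - xh))^2 / (2 * \<alpha>) \<le> rbp_obj \<alpha> xs"
    using primal_quadratic_growth[OF a, of "transpose A *v ym" xs] unfolding xh_def by simp
  then have "(norm (xs - xh))^2 / (2 * \<alpha>) \<le> 0" using opt by simp
  then have "(norm (xs - xh))^2 \<le> 0" using a by (simp add: divide_le_0_iff)
  then show ?thesis unfolding Ystar_def xh_def by simp
qed

lemma Ystar_nonempty:
  fixes A :: "real^'n^'m"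
  assumes "\<alpha> > 0" "A *v z0 = b" "is_rbp_solution A b \<alpha> xs"
  shows "Ystar A \<alpha> xs \<noteq> {}"
  using dual_f_attains_min[OF assms(1,2)] dual_min_stationary[OF assms(1)]
    stationary_in_Ystar[OF assms(1,3)] by blast

lemma Ystar_closed:
  fixes A :: "real^'n^'m"
  shows "closed (Ystar A \<alpha> xs)"
proof -
  have "continuous_on UNIV (\<lambda>y. transpose A *v y)"
    by (rule linear_continuous_on) simp
  then have "continuous_on UNIV (\<lambda>y. \<alpha> *\<^sub>R shrink (transpose A *v y))"
    by (intro continuous_intros continuous_on_compose2[OF shrink_cont]) auto
  then show ?thesis unfolding Ystar_def by (intro closed_Collect_eq) auto
qed

lemma Ystar_grad_zero:
  fixes A :: "real^'n^'m"
  assumes "A *v xs = b" "yb \<in> Ystar A \<alpha> xs"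
  shows "dual_grad A b \<alpha> yb = 0"
  using assms unfolding Ystar_def dual_grad_def by (simp flip: matrix_vector_mult_scaleR)

text \<open>By convexity, points of Y* minimise f.\<close>
lemma Ystar_INF:
  fixes A :: "real^'n^'m"
  assumes "\<alpha> > 0" "A *v xs = b" "yb \<in> Ystar A \<alpha> xs"
  shows "(INF z. dual_f A b \<alpha> z) = dual_f A b \<alpha> yb"
proof -
  have "dual_f A b \<alpha> yb \<le> dual_f A b \<alpha> z" for z
    using dual_f_bounds(1)[OF assms(1), of A b z yb] Ystar_grad_zero[OF assms(2,3)] by simp
  then show ?thesis by (intro cInf_eq_minimum) auto
qed

section \<open>Projection onto Y* and a variational inequality\<close>

text \<open>The support of x*, and the coordinates off the support where A^T y is at the
  boundary of the dead zone (the "active" constraints).\<close>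
definition supp :: "real^'n \<Rightarrow> 'n set" where
  "supp x = {i. x $ i \<noteq> 0}"

definition active :: "real^'n^'m \<Rightarrow> real^'m \<Rightarrow> real^'n \<Rightarrow> 'n set" where
  "active A yb xs = {i. xs $ i = 0 \<and> \<bar>(transpose A *v yb) $ i\<bar> = 1}"

lemma Ystar_coord:
  assumes "yb \<in> Ystar A \<alpha> xs"
  shows "\<alpha> * sh ((transpose A *v yb) $ k) = xs $ k"
  using assms unfolding Ystar_def by (simp add: vec_eq_iff shrink_nth)

lemma Ystar_coord_supp:
  assumes "\<alpha> > 0" "yb \<in> Ystar A \<alpha> xs" "k \<in> supp xs"
  shows "(transpose A *v yb) $ k = sgn (xs $ k) * (1 + \<bar>xs $ k\<bar> / \<alpha>)"
  using sh_inverse_nonzero[OF assms(1) Ystar_coord[OF assms(2)]] assms(3) by (simp add: supp_def)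

lemma Ystar_coord_off_supp:
  assumes "\<alpha> > 0" "yb \<in> Ystar A \<alpha> xs" "k \<notin> supp xs"
  shows "\<bar>(transpose A *v yb) $ k\<bar> \<le> 1"
  using sh_inverse_zero[OF assms(1)] Ystar_coord[OF assms(2), of k] assms(3) by (simp add: supp_def)

lemma nearest_point_variational:
  fixes y yb w :: "'a::real_inner"
  assumes near: "\<And>u. u \<in> Y \<Longrightarrow> dist y yb \<le> dist y u"
    and e0: "\<epsilon>0 > 0" and feas: "\<And>\<epsilon>. 0 < \<epsilon> \<Longrightarrow> \<epsilon> \<le> \<epsilon>0 \<Longrightarrow> yb + \<epsilon> *\<^sub>R w \<in> Y"
  shows "(y - yb) \<bullet> w \<le> 0"
proof (rule ccontr)
  assume "\<not> (y - yb) \<bullet> w \<le> 0"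
  then have p: "(y - yb) \<bullet> w > 0" by simp
  have key: "2 * ((y - yb) \<bullet> w) \<le> \<epsilon> * (norm w)^2" if e: "0 < \<epsilon>" "\<epsilon> \<le> \<epsilon>0" for \<epsilon>
  proof -
    have "(norm (y - yb))^2 \<le> (norm ((y - yb) - \<epsilon> *\<^sub>R w))^2"
      using near[OF feas[OF e]] by (simp add: dist_norm diff_diff_eq)
    then have "\<epsilon> * (2 * ((y - yb) \<bullet> w)) \<le> \<epsilon> * (\<epsilon> * (w \<bullet> w))"
      unfolding power2_norm_eq_inner
      by (simp add: inner_diff_left inner_diff_right inner_commute power2_eq_square algebra_simps)
    then show ?thesis using e(1) by (simp add: power2_norm_eq_inner)
  qed
  define \<epsilon> where "\<epsilon> = min \<epsilon>0 (((y - yb) \<bullet> w) / ((norm w)^2 + 1))"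
  have "0 < ((y - yb) \<bullet> w) / ((norm w)^2 + 1)" using p by (simp add: add_nonneg_pos)
  then have e: "0 < \<epsilon>" "\<epsilon> \<le> \<epsilon>0" unfolding \<epsilon>_def using e0 by auto
  have "\<epsilon> * (norm w)^2 \<le> (((y - yb) \<bullet> w) / ((norm w)^2 + 1)) * (norm w)^2"
    unfolding \<epsilon>_def by (intro mult_right_mono) auto
  also have "\<dots> = ((y - yb) \<bullet> w) * ((norm w)^2 / ((norm w)^2 + 1))" by simp
  also have "\<dots> < (y - yb) \<bullet> w"
  proof -
    have "(norm w)^2 / ((norm w)^2 + 1) < 1" by (simp add: add_nonneg_pos)
    then have "((y - yb) \<bullet> w) * ((norm w)^2 / ((norm w)^2 + 1)) < ((y - yb) \<bullet> w) * 1"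
      using p by (intro mult_strict_left_mono) auto
    then show ?thesis by simp
  qed
  finally show False using key[OF e] p by simp
qed

lemma dead_zone_perturb:
  fixes z d :: real
  assumes "\<bar>z\<bar> \<le> 1" and "\<bar>z\<bar> = 1 \<Longrightarrow> z * d \<le> 0"
    and "\<bar>d\<bar> \<le> (if \<bar>z\<bar> = 1 then 2 else 1 - \<bar>z\<bar>)"
  shows "\<bar>z + d\<bar> \<le> 1"
proof (cases "\<bar>z\<bar> = 1")
  case True
  then have "z = 1 \<or> z = -1" by auto
  then show ?thesis using assms True by auto
next
  case False
  then show ?thesis using assms by auto
qed

lemma Ystar_feasible_direction:
  fixes A :: "real^'n^'m"
  assumes a: "\<alpha> > 0" and yb: "yb \<in> Ystar A \<alpha> xs"
    and wS: "\<forall>k\<in>supp xs. column k A \<bullet> w = 0"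
    and wT: "\<forall>k\<in>active A yb xs. (transpose A *v yb) $ k * (column k A \<bullet> w) \<le> 0"
  obtains \<epsilon>0 where "\<epsilon>0 > 0" "\<And>\<epsilon>. 0 < \<epsilon> \<Longrightarrow> \<epsilon> \<le> \<epsilon>0 \<Longrightarrow> yb + \<epsilon> *\<^sub>R w \<in> Ystar A \<alpha> xs"
proof -
  let ?zb = "transpose A *v yb"
  let ?aw = "\<lambda>k. column k A \<bullet> w"
  define \<delta> where "\<delta> k = (if \<bar>?zb $ k\<bar> = 1 then 2 else 1 - \<bar>?zb $ k\<bar>)" for k
  have \<delta>pos: "\<delta> k > 0" if "k \<notin> supp xs" for k
    using Ystar_coord_off_supp[OF a yb that] unfolding \<delta>_def by auto
  define \<epsilon>0 where "\<epsilon>0 = Min (insert 1 ((\<lambda>k. \<delta> k / (\<bar>?aw k\<bar> + 1)) ` (- supp xs)))"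
  have fin: "finite (insert 1 ((\<lambda>k. \<delta> k / (\<bar>?aw k\<bar> + 1)) ` (- supp xs)))" by simp
  have "\<epsilon>0 > 0" unfolding \<epsilon>0_def using fin \<delta>pos
    by (subst Min_gr_iff) (auto intro!: divide_pos_pos)
  moreover have "yb + \<epsilon> *\<^sub>R w \<in> Ystar A \<alpha> xs" if e: "0 < \<epsilon>" "\<epsilon> \<le> \<epsilon>0" for \<epsilon>
  proof -
    have comp: "(transpose A *v (yb + \<epsilon> *\<^sub>R w)) $ k = ?zb $ k + \<epsilon> * ?aw k" for k
      by (simp add: transpose_mult_nth inner_add_right)
    have "\<alpha> * sh (?zb $ k + \<epsilon> * ?aw k) = xs $ k" for k
    proof (cases "k \<in> supp xs")
      case True
      then show ?thesis using wS Ystar_coord[OF yb] by simp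
    next
      case False
      have "\<epsilon>0 \<le> \<delta> k / (\<bar>?aw k\<bar> + 1)"
        unfolding \<epsilon>0_def using fin False by (intro Min_le) auto
      moreover have "\<epsilon> * (\<bar>?aw k\<bar> + 1) \<le> \<epsilon>0 * (\<bar>?aw k\<bar> + 1)"
        using e(2) by (intro mult_right_mono) auto
      ultimately have "\<epsilon> * (\<bar>?aw k\<bar> + 1) \<le> \<delta> k"
        by (simp add: pos_le_divide_eq)
      then have "\<bar>\<epsilon> * ?aw k\<bar> \<le> \<delta> k"
        using e(1) by (simp add: abs_mult distrib_left)
      moreover have "\<bar>?zb $ k\<bar> = 1 \<Longrightarrow> ?zb $ k * (\<epsilon> * ?aw k) \<le> 0"
        using wT False e(1) unfolding active_def supp_def
        by (simp add: mult.left_commute mult_nonneg_nonpos)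
      ultimately have "\<bar>?zb $ k + \<epsilon> * ?aw k\<bar> \<le> 1"
        using Ystar_coord_off_supp[OF a yb False] by (intro dead_zone_perturb) (simp_all add: \<delta>_def)
      then show ?thesis using False sh_zero unfolding supp_def by simp
    qed
    then show ?thesis unfolding Ystar_def by (simp add: vec_eq_iff shrink_nth comp)
  qed
  ultimately show ?thesis using that by blast
qed

lemma Ystar_variational:
  fixes A :: "real^'n^'m"
  assumes "\<alpha> > 0" "yb \<in> Ystar A \<alpha> xs"
    and "\<And>u. u \<in> Ystar A \<alpha> xs \<Longrightarrow> dist y yb \<le> dist y u"
    and "\<forall>k\<in>supp xs. column k A \<bullet> w = 0"
    and "\<forall>k\<in>active A yb xs. (transpose A *v yb) $ k * (column k A \<bullet> w) \<le> 0"
  shows "(y - yb) \<bullet> w \<le> 0"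
proof -
  obtain \<epsilon>0 where e0: "\<epsilon>0 > 0"
    and feas: "\<And>\<epsilon>. 0 < \<epsilon> \<Longrightarrow> \<epsilon> \<le> \<epsilon>0 \<Longrightarrow> yb + \<epsilon> *\<^sub>R w \<in> Ystar A \<alpha> xs"
    using Ystar_feasible_direction[OF assms(1,2,4,5)] by blast
  show ?thesis by (rule nearest_point_variational[OF assms(3) e0 feas])
qed

section \<open>Restricted strong convexity\<close>

lemma Ystar_constraint_coord_nonzero:
  fixes A :: "real^'n^'m"
  assumes a: "\<alpha> > 0" and yb: "yb \<in> Ystar A \<alpha> xs" and k: "k \<in> supp xs \<union> active A yb xs"
  shows "(transpose A *v yb) $ k \<noteq> 0"
proof (cases "k \<in> supp xs")
  case True
  have "0 \<le> \<bar>xs $ k\<bar> / \<alpha>" using a by simp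
  then have "1 + \<bar>xs $ k\<bar> / \<alpha> \<noteq> 0" by linarith
  moreover have "sgn (xs $ k) \<noteq> 0" using True by (auto simp: supp_def sgn_if)
  ultimately show ?thesis unfolding Ystar_coord_supp[OF a yb True] by simp
next
  case False
  then show ?thesis using k unfolding active_def by auto
qed

text \<open>Farkas' lemma applied to the variational inequality, with the columns signed by
  sgn(A^T yb): y - yb is a combination of linearly independent columns of A indexed
  by the support and the active set, whose coefficients on the active set have the
  sign of A^T yb.\<close>
lemma Ystar_cone_representation:
  fixes A :: "real^'n^'m"
  assumes a: "\<alpha> > 0" and yb: "yb \<in> Ystar A \<alpha> xs"
    and near: "\<And>u. u \<in> Ystar A \<alpha> xs \<Longrightarrow> dist y yb \<le> dist y u"
  obtains J c where "J \<subseteq> supp xs \<union> active A yb xs" "indep_fam (\<lambda>k. column k A) J"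
    "y - yb = (\<Sum>k\<in>J. c k *\<^sub>R column k A)"
    "\<And>k. k \<in> J \<inter> active A yb xs \<Longrightarrow> 0 \<le> c k * (transpose A *v yb) $ k"
proof -
  let ?zb = "transpose A *v yb"
  let ?S = "supp xs" and ?T = "active A yb xs"
  define \<sigma> where "\<sigma> k = sgn (?zb $ k)" for k
  define g where "g k = \<sigma> k *\<^sub>R column k A" for k
  have sig1: "\<sigma> k * \<sigma> k = 1" if "k \<in> ?S \<union> ?T" for k
    using Ystar_constraint_coord_nonzero[OF a yb that] unfolding \<sigma>_def by (simp add: sgn_if)
  have sigT: "\<sigma> k = ?zb $ k" if "k \<in> ?T" for k
    using that unfolding active_def \<sigma>_def by (auto simp: sgn_if abs_if)
  have "(y - yb) \<bullet> w \<le> 0"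
    if wS: "\<forall>k\<in>?S. g k \<bullet> w = 0" and wT: "\<forall>k\<in>?T. g k \<bullet> w \<le> 0" for w
  proof (rule Ystar_variational[OF a yb near])
    show "\<forall>k\<in>?S. column k A \<bullet> w = 0"
    proof
      fix k assume k: "k \<in> ?S"
      have "column k A \<bullet> w = \<sigma> k * (\<sigma> k * (column k A \<bullet> w))"
        using sig1[of k] k by (simp flip: mult.assoc)
      also have "\<dots> = 0" using wS k by (simp add: g_def)
      finally show "column k A \<bullet> w = 0" .
    qed
    show "\<forall>k\<in>?T. ?zb $ k * (column k A \<bullet> w) \<le> 0"
      using wT sigT unfolding g_def by simp
  qed
  moreover have "?S \<inter> ?T = {}" unfolding supp_def active_def by auto
  ultimately obtain J c' where J: "J \<subseteq> ?S \<union> ?T" and indg: "indep_fam g J"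
    and vrep: "y - yb = (\<Sum>k\<in>J. c' k *\<^sub>R g k)" and cpos: "\<forall>k\<in>J \<inter> ?T. c' k \<ge> 0"
    using farkas_indep[of ?T ?S g "y - yb"] by auto
  define c where "c k = c' k * \<sigma> k" for k
  have "y - yb = (\<Sum>k\<in>J. c k *\<^sub>R column k A)" unfolding vrep g_def c_def by simp
  moreover have "indep_fam (\<lambda>k. column k A) J"
  proof (rule indep_fam_unsign[of \<sigma>])
    show "indep_fam (\<lambda>k. \<sigma> k *\<^sub>R column k A) J" using indg unfolding g_def .
    show "\<sigma> k * \<sigma> k = 1" if "k \<in> J" for k using sig1 J that by blast
  qed
  moreover have "0 \<le> c k * ?zb $ k" if "k \<in> J \<inter> ?T" for k
    using cpos that sig1[of k] sigT[of k] unfolding c_def by (simp add: mult.assoc)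
  ultimately show ?thesis using that J by blast
qed

text \<open>Coordinatewise gap of z = A^T y to the set of values compatible with x*: the
  distance to zb_k = (A^T yb)_k on the support, and to the dead zone [-1, 1] off it.\<close>
definition rsc_gap :: "real^'n \<Rightarrow> real^'n \<Rightarrow> real^'n \<Rightarrow> 'n \<Rightarrow> real" where
  "rsc_gap xs zb z k = (if k \<in> supp xs then \<bar>z $ k - zb $ k\<bar> else max (\<bar>z $ k\<bar> - 1) 0)"

lemma dead_zone_gap_bound:
  fixes c z zb :: real
  assumes "\<bar>zb\<bar> = 1" "0 \<le> c * zb"
  shows "c * (z - zb) \<le> \<bar>c\<bar> * max (\<bar>z\<bar> - 1) 0"
proof -
  let ?M = "max (\<bar>z\<bar> - 1) 0"
  from assms(1) have "zb = 1 \<or> zb = -1" by auto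
  then show ?thesis
  proof
    assume z1: "zb = 1"
    have "c * (z - 1) \<le> c * ?M" using assms z1 by (intro mult_left_mono) auto
    then show ?thesis using assms z1 by simp
  next
    assume z1: "zb = -1"
    have "(- c) * (-(z + 1)) \<le> (- c) * ?M" using assms z1 by (intro mult_left_mono) auto
    moreover have "(- c) * (-(z + 1)) = c * (z - zb)" using z1 by (simp add: algebra_simps)
    moreover have "\<bar>c\<bar> = - c" using assms z1 by simp
    ultimately show ?thesis by simp
  qed
qed

lemma cone_combination_inner_bound:
  fixes A :: "real^'n^'m"
  assumes J: "J \<subseteq> supp xs \<union> active A yb xs" and v: "y - yb = (\<Sum>k\<in>J. c k *\<^sub>R column k A)"
    and sign: "\<And>k. k \<in> J \<inter> active A yb xs \<Longrightarrow> 0 \<le> c k * (transpose A *v yb) $ k"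
  shows "(y - yb) \<bullet> (y - yb) \<le> (\<Sum>k\<in>J. \<bar>c k\<bar> * rsc_gap xs (transpose A *v yb) (transpose A *v y) k)"
proof -
  let ?zb = "transpose A *v yb" and ?z = "transpose A *v y"
  have "(y - yb) \<bullet> (y - yb) = (\<Sum>k\<in>J. c k * (column k A \<bullet> (y - yb)))"
    by (subst (1) v) (simp add: inner_sum_left)
  also have "\<dots> = (\<Sum>k\<in>J. c k * (?z $ k - ?zb $ k))"
    by (simp flip: transpose_mult_nth add: matrix_vector_mult_diff_distrib)
  also have "\<dots> \<le> (\<Sum>k\<in>J. \<bar>c k\<bar> * rsc_gap xs ?zb ?z k)"
  proof (rule sum_mono)
    fix k assume kJ: "k \<in> J"
    show "c k * (?z $ k - ?zb $ k) \<le> \<bar>c k\<bar> * rsc_gap xs ?zb ?z k"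
    proof (cases "k \<in> supp xs")
      case True
      then show ?thesis unfolding rsc_gap_def
        using abs_ge_self[of "c k * (?z $ k - ?zb $ k)"] by (simp add: abs_mult)
    next
      case False
      then have kT: "k \<in> active A yb xs" using kJ J by auto
      have "\<bar>?zb $ k\<bar> = 1" using kT by (simp add: active_def)
      then have "c k * (?z $ k - ?zb $ k) \<le> \<bar>c k\<bar> * max (\<bar>?z $ k\<bar> - 1) 0"
        using sign[of k] kJ kT by (intro dead_zone_gap_bound) auto
      then show ?thesis using False unfolding rsc_gap_def by simp
    qed
  qed
  finally show ?thesis .
qed

lemma young_inequality:
  fixes c r l :: real
  assumes "l > 0"
  shows "\<bar>c\<bar> * r \<le> l * c^2 / 2 + r^2 / (2 * l)"
proof -
  have "0 \<le> (l * \<bar>c\<bar> - r)^2" by simp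
  then have "2 * l * (\<bar>c\<bar> * r) \<le> l^2 * c^2 + r^2"
    by (simp add: power2_eq_square algebra_simps)
  then show ?thesis using assms by (simp add: power2_eq_square field_simps)
qed

text \<open>Combining the bound above with the Rayleigh bound lambda_A sum c_k^2 <= |y - yb|^2
  (independent columns) and Young's inequality gives lambda_A |y - yb|^2 <= sum of the
  squared gaps.\<close>
lemma Ystar_distance_by_gaps:
  fixes A :: "real^'n^'m"
  assumes A0: "A \<noteq> 0" and a: "\<alpha> > 0" and yb: "yb \<in> Ystar A \<alpha> xs"
    and near: "\<And>u. u \<in> Ystar A \<alpha> xs \<Longrightarrow> dist y yb \<le> dist y u"
  shows "lambdaA A * (norm (y - yb))^2
      \<le> (\<Sum>k\<in>UNIV. (rsc_gap xs (transpose A *v yb) (transpose A *v y) k)^2)"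
proof -
  let ?r = "rsc_gap xs (transpose A *v yb) (transpose A *v y)"
  define lam where "lam = lambdaA A"
  have lpos: "lam > 0" unfolding lam_def using lambdaA_pos_le[OF A0] by simp
  obtain J c where J: "J \<subseteq> supp xs \<union> active A yb xs" and ind: "indep_fam (\<lambda>k. column k A) J"
    and v: "y - yb = (\<Sum>k\<in>J. c k *\<^sub>R column k A)"
    and sign: "\<And>k. k \<in> J \<inter> active A yb xs \<Longrightarrow> 0 \<le> c k * (transpose A *v yb) $ k"
    using Ystar_cone_representation[OF a yb near] by blast
  have inner: "(y - yb) \<bullet> (y - yb) \<le> (\<Sum>k\<in>J. \<bar>c k\<bar> * ?r k)"
    by (rule cone_combination_inner_bound[OF J v sign])
  have rayleigh: "lam * (\<Sum>k\<in>J. (c k)^2) \<le> (y - yb) \<bullet> (y - yb)"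
  proof (cases "J = {}")
    case False
    then show ?thesis unfolding lam_def v power2_norm_eq_inner[symmetric]
      by (rule rayleigh_bound[OF _ ind])
  qed simp
  have "(\<Sum>k\<in>J. \<bar>c k\<bar> * ?r k) \<le> (\<Sum>k\<in>J. lam * (c k)^2 / 2 + (?r k)^2 / (2 * lam))"
    by (intro sum_mono young_inequality lpos)
  also have "\<dots> = lam * (\<Sum>k\<in>J. (c k)^2) / 2 + (\<Sum>k\<in>J. (?r k)^2) / (2 * lam)"
    by (simp add: sum.distrib sum_divide_distrib sum_distrib_left)
  finally have "(y - yb) \<bullet> (y - yb) \<le> ((y - yb) \<bullet> (y - yb)) / 2 + (\<Sum>k\<in>J. (?r k)^2) / (2 * lam)"
    using inner rayleigh by linarith
  then have "lam * ((y - yb) \<bullet> (y - yb)) \<le> (\<Sum>k\<in>J. (?r k)^2)"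
    using lpos by (simp add: field_simps)
  also have "\<dots> \<le> (\<Sum>k\<in>UNIV. (?r k)^2)" by (intro sum_mono2) auto
  finally show ?thesis unfolding lam_def by (simp add: power2_norm_eq_inner)
qed

lemma nu_const_split:
  fixes A :: "real^'n^'m"
  assumes a: "\<alpha> > 0" and xs0: "xs \<noteq> 0"
  obtains m where "nu_const A \<alpha> xs = lambdaA A * m" "0 < m" "m < \<alpha>"
    "\<And>i. i \<in> supp xs \<Longrightarrow> m \<le> \<alpha> * \<bar>xs $ i\<bar> / (\<bar>xs $ i\<bar> + 2 * \<alpha>)"
proof -
  define W where "W = (\<lambda>i. \<alpha> * \<bar>xs $ i\<bar> / (\<bar>xs $ i\<bar> + 2 * \<alpha>)) ` supp xs"
  define m where "m = Min W"
  have "supp xs \<noteq> {}" using xs0 unfolding supp_def by (auto simp: vec_eq_iff)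
  then have "m \<in> W" unfolding m_def W_def by (intro Min_in) auto
  then obtain i0 where i0: "i0 \<in> supp xs" "m = \<alpha> * \<bar>xs $ i0\<bar> / (\<bar>xs $ i0\<bar> + 2 * \<alpha>)"
    unfolding W_def by blast
  have pos: "0 < \<bar>xs $ i0\<bar> + 2 * \<alpha>" using a by (simp add: add_nonneg_pos)
  show ?thesis
  proof
    show "nu_const A \<alpha> xs = lambdaA A * m" unfolding nu_const_def m_def W_def supp_def ..
    show "0 < m" using i0 a pos unfolding supp_def by simp
    show "m < \<alpha>" using i0 a pos by (simp add: divide_less_eq)
    show "m \<le> \<alpha> * \<bar>xs $ i\<bar> / (\<bar>xs $ i\<bar> + 2 * \<alpha>)" if "i \<in> supp xs" for i
      unfolding m_def W_def using that by (intro Min_le) auto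
  qed
qed

lemma sh_gain_by_gap:
  fixes A :: "real^'n^'m"
  assumes a: "\<alpha> > 0" and yb: "yb \<in> Ystar A \<alpha> xs" and m: "0 \<le> m" "m \<le> \<alpha>"
    and mS: "\<And>i. i \<in> supp xs \<Longrightarrow> m \<le> \<alpha> * \<bar>xs $ i\<bar> / (\<bar>xs $ i\<bar> + 2 * \<alpha>)"
  shows "m / \<alpha> * (rsc_gap xs (transpose A *v yb) z i)^2
      \<le> (sh (z $ i) - sh ((transpose A *v yb) $ i)) * (z $ i - (transpose A *v yb) $ i)"
proof (cases "i \<in> supp xs")
  case True
  let ?zb = "transpose A *v yb"
  define \<beta> where "\<beta> = \<bar>xs $ i\<bar> / \<alpha>"
  have bpos: "\<beta> > 0" using True a unfolding \<beta>_def supp_def by simp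
  have "\<beta> / (\<beta> + 2) = \<bar>xs $ i\<bar> / (\<bar>xs $ i\<bar> + 2 * \<alpha>)"
    unfolding \<beta>_def using a by (simp add: field_simps)
  also have "\<dots> \<ge> m / \<alpha>" using mS[OF True] a by (simp add: field_simps)
  finally have "m / \<alpha> * (z $ i - ?zb $ i)^2 \<le> \<beta> / (\<beta> + 2) * (z $ i - ?zb $ i)^2"
    by (intro mult_right_mono) auto
  also have "\<dots> \<le> (sh (z $ i) - sh (?zb $ i)) * (z $ i - ?zb $ i)"
    unfolding Ystar_coord_supp[OF a yb True] \<beta>_def[symmetric]
    by (rule sh_monotone_at_support[OF bpos]) (use True in \<open>simp add: supp_def abs_sgn\<close>)
  finally show ?thesis using True unfolding rsc_gap_def by simp
next
  case False
  have "m / \<alpha> * (rsc_gap xs (transpose A *v yb) z i)^2 \<le> 1 * (rsc_gap xs (transpose A *v yb) z i)^2"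
    using a m by (intro mult_right_mono) auto
  also have "\<dots> \<le> (sh (z $ i) - sh ((transpose A *v yb) $ i)) * (z $ i - (transpose A *v yb) $ i)"
    unfolding rsc_gap_def using False
    by (simp add: sh_monotone_off_support Ystar_coord_off_supp[OF a yb])
  finally show ?thesis .
qed

theorem restricted_strong_convexity:
  fixes A :: "real^'n^'m"
  assumes a: "\<alpha> > 0" and A0: "A \<noteq> 0" and xs0: "xs \<noteq> 0" and yb: "yb \<in> Ystar A \<alpha> xs"
    and near: "\<And>u. u \<in> Ystar A \<alpha> xs \<Longrightarrow> dist y yb \<le> dist y u"
  shows "nu_const A \<alpha> xs * (norm (y - yb))^2
      \<le> (dual_grad A b \<alpha> y - dual_grad A b \<alpha> yb) \<bullet> (y - yb)"
proof -
  let ?r = "rsc_gap xs (transpose A *v yb) (transpose A *v y)"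
  obtain m where nu: "nu_const A \<alpha> xs = lambdaA A * m" and m: "0 < m" "m < \<alpha>"
    and mS: "\<And>i. i \<in> supp xs \<Longrightarrow> m \<le> \<alpha> * \<bar>xs $ i\<bar> / (\<bar>xs $ i\<bar> + 2 * \<alpha>)"
    using nu_const_split[OF a xs0] by blast
  have "m * (lambdaA A * (norm (y - yb))^2) \<le> m * (\<Sum>i\<in>UNIV. (?r i)^2)"
    using Ystar_distance_by_gaps[OF A0 a yb near] m by (intro mult_left_mono) auto
  also have "\<dots> = \<alpha> * (\<Sum>i\<in>UNIV. m / \<alpha> * (?r i)^2)"
    using a by (simp add: sum_distrib_left)
  also have "\<dots> \<le> \<alpha> * (\<Sum>i\<in>UNIV. (sh ((transpose A *v y) $ i) - sh ((transpose A *v yb) $ i))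
                              * ((transpose A *v y) $ i - (transpose A *v yb) $ i))"
    using a m by (intro mult_left_mono sum_mono sh_gain_by_gap[OF a yb] mS) auto
  also have "\<dots> = (dual_grad A b \<alpha> y - dual_grad A b \<alpha> yb) \<bullet> (y - yb)"
    by (rule dual_grad_inner[symmetric])
  finally show ?thesis unfolding nu by (simp add: mult_ac)
qed

section \<open>Linear convergence of the gradient iteration\<close>

lemma gradient_step_contraction:
  fixes G :: "'a::real_inner \<Rightarrow> 'a"
  assumes yb: "yb \<in> Y" "infdist u Y = norm (u - yb)"
    and rsi: "\<nu> * (norm (u - yb))^2 \<le> G u \<bullet> (u - yb)"
    and growth: "norm (G u) \<le> L * norm (u - yb)" and h: "h \<ge> 0"
  shows "infdist (u - h *\<^sub>R G u) Y \<le> sqrt (1 - 2 * h * \<nu> + h^2 * L^2) * infdist u Y"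
proof -
  define d where "d = u - yb"
  have "(norm (u - h *\<^sub>R G u - yb))^2 = (norm d)^2 - 2 * h * (G u \<bullet> d) + h^2 * (norm (G u))^2"
    unfolding d_def power2_norm_eq_inner
    by (simp add: inner_diff_left inner_diff_right inner_commute power2_eq_square algebra_simps)
  also have "\<dots> \<le> (norm d)^2 - 2 * h * (\<nu> * (norm d)^2) + h^2 * (L * norm d)^2"
  proof -
    have "2 * h * (\<nu> * (norm d)^2) \<le> 2 * h * (G u \<bullet> d)" using mult_left_mono[OF rsi h] unfolding d_def by simp
    moreover have "h^2 * (norm (G u))^2 \<le> h^2 * (L * norm d)^2"
      using growth unfolding d_def by (intro mult_left_mono power_mono) auto
    ultimately show ?thesis by linarith
  qed
  also have "\<dots> = (1 - 2 * h * \<nu> + h^2 * L^2) * (norm d)^2"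
    by (simp add: power2_eq_square algebra_simps)
  finally have "norm (u - h *\<^sub>R G u - yb) \<le> sqrt (1 - 2 * h * \<nu> + h^2 * L^2) * norm d"
    by (metis abs_norm_cancel real_sqrt_abs real_sqrt_le_mono real_sqrt_mult)
  moreover have "infdist (u - h *\<^sub>R G u) Y \<le> norm (u - h *\<^sub>R G u - yb)"
    using infdist_le[OF yb(1)] by (simp add: dist_norm)
  ultimately show ?thesis using yb(2) unfolding d_def by simp
qed

lemma iterated_contraction:
  fixes y :: "nat \<Rightarrow> 'a::metric_space"
  assumes step: "\<And>k. infdist (y (Suc k)) Y \<le> q * infdist (y k) Y" and q: "q \<ge> 0"
  shows "infdist (y k) Y \<le> q ^ k * infdist (y 0) Y"
proof (induction k)
  case (Suc k)
  have "infdist (y (Suc k)) Y \<le> q * infdist (y k) Y" by (rule step)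
  also have "\<dots> \<le> q * (q ^ k * infdist (y 0) Y)" using Suc q by (intro mult_left_mono)
  finally show ?case by (simp add: mult_ac)
qed simp

lemma rate_bounds:
  fixes h \<nu> L :: real
  assumes "0 < h" "\<nu> < L" "h < 2 * \<nu> / L^2" "L > 0"
  shows "0 < 1 - 2 * h * \<nu> + h^2 * L^2" "1 - 2 * h * \<nu> + h^2 * L^2 < 1"
proof -
  have "1 - 2 * h * \<nu> + h^2 * L^2 = (1 - h * L)^2 + 2 * h * (L - \<nu>)"
    by (simp add: power2_eq_square algebra_simps)
  also have "\<dots> > 0" using assms by (intro add_nonneg_pos) auto
  finally show "0 < 1 - 2 * h * \<nu> + h^2 * L^2" .
  have "h * L^2 < 2 * \<nu>" using assms by (simp add: pos_less_divide_eq)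
  then have "h * (h * L^2) < h * (2 * \<nu>)" using assms by (intro mult_strict_left_mono)
  then show "1 - 2 * h * \<nu> + h^2 * L^2 < 1" by (simp add: power2_eq_square algebra_simps)
qed

lemma nu_const_less:
  fixes A :: "real^'n^'m"
  assumes a: "\<alpha> > 0" and A0: "A \<noteq> 0" and xs0: "xs \<noteq> 0"
  shows "nu_const A \<alpha> xs < \<alpha> * (spec_norm A)^2"
proof -
  obtain m where nu: "nu_const A \<alpha> xs = lambdaA A * m" and m: "0 < m" "m < \<alpha>"
    using nu_const_split[OF a xs0] by blast
  have lp: "0 < lambdaA A" "lambdaA A \<le> (spec_norm A)^2" using lambdaA_pos_le[OF A0] by auto
  have "lambdaA A * m < lambdaA A * \<alpha>" using m lp by (intro mult_strict_left_mono)
  also have "\<dots> \<le> (spec_norm A)^2 * \<alpha>" using lp a by (intro mult_right_mono) auto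
  finally show ?thesis unfolding nu by (simp add: mult_ac)
qed

lemma dual_step_contraction:
  fixes A :: "real^'n^'m"
  assumes a: "\<alpha> > 0" and A0: "A \<noteq> 0" and Axs: "A *v xs = b" and xs0: "xs \<noteq> 0"
    and Yne: "Ystar A \<alpha> xs \<noteq> {}" and h: "h \<ge> 0"
  shows "infdist (u - h *\<^sub>R dual_grad A b \<alpha> u) (Ystar A \<alpha> xs)
      \<le> sqrt (1 - 2 * h * nu_const A \<alpha> xs + h^2 * (\<alpha> * (spec_norm A)^2)^2) * infdist u (Ystar A \<alpha> xs)"
proof -
  let ?Y = "Ystar A \<alpha> xs"
  obtain yb where yb: "yb \<in> ?Y" "infdist u ?Y = dist u yb"
    using infdist_attains_inf[OF Ystar_closed Yne] by blast
  have near: "dist u yb \<le> dist u w" if "w \<in> ?Y" for w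
    using infdist_le[OF that, of u] yb(2) by simp
  have g0: "dual_grad A b \<alpha> yb = 0" by (rule Ystar_grad_zero[OF Axs yb(1)])
  show ?thesis
  proof (rule gradient_step_contraction[OF yb(1) _ _ _ h])
    show "infdist u ?Y = norm (u - yb)" using yb(2) by (simp add: dist_norm)
    show "nu_const A \<alpha> xs * (norm (u - yb))^2 \<le> dual_grad A b \<alpha> u \<bullet> (u - yb)"
      using restricted_strong_convexity[OF a A0 xs0 yb(1) near, of b] g0 by simp
    show "norm (dual_grad A b \<alpha> u) \<le> \<alpha> * (spec_norm A)^2 * norm (u - yb)"
      using dual_grad_lipschitz[OF a, of A b u yb] g0 by simp
  qed
qed

text \<open>Function values: by the descent lemma at a nearest point of Y*, the dual gap is
  at most L/2 times the squared distance to Y*.\<close>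
lemma dual_gap_bound:
  fixes A :: "real^'n^'m"
  assumes a: "\<alpha> > 0" and Axs: "A *v xs = b" and Yne: "Ystar A \<alpha> xs \<noteq> {}"
  shows "dual_f A b \<alpha> y - (INF z. dual_f A b \<alpha> z)
      \<le> \<alpha> * (spec_norm A)^2 / 2 * (infdist y (Ystar A \<alpha> xs))^2"
proof -
  obtain yb where yb: "yb \<in> Ystar A \<alpha> xs" "infdist y (Ystar A \<alpha> xs) = dist y yb"
    using infdist_attains_inf[OF Ystar_closed Yne] by blast
  have "dual_f A b \<alpha> y - dual_f A b \<alpha> yb \<le> \<alpha> / 2 * (norm (transpose A *v (y - yb)))^2"
    using dual_f_bounds(2)[OF a, of A b y yb] Ystar_grad_zero[OF Axs yb(1)] by simp
  also have "\<dots> \<le> \<alpha> / 2 * (spec_norm A * norm (y - yb))^2"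
    using a spec_norm_bound_transpose[of A "y - yb"] by (intro mult_left_mono power_mono) auto
  finally show ?thesis
    unfolding Ystar_INF[OF a Axs yb(1)] yb(2) dist_norm by (simp add: power_mult_distrib)
qed

lemma primal_error_bound:
  fixes A :: "real^'n^'m"
  assumes a: "\<alpha> > 0" and Yne: "Ystar A \<alpha> xs \<noteq> {}"
  shows "norm (\<alpha> *\<^sub>R shrink (transpose A *v y) - xs) \<le> \<alpha> * spec_norm A * infdist y (Ystar A \<alpha> xs)"
proof -
  obtain yb where yb: "yb \<in> Ystar A \<alpha> xs" "infdist y (Ystar A \<alpha> xs) = dist y yb"
    using infdist_attains_inf[OF Ystar_closed Yne] by blast
  have xs: "xs = \<alpha> *\<^sub>R shrink (transpose A *v yb)" using yb(1) unfolding Ystar_def by simp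
  have "norm (\<alpha> *\<^sub>R shrink (transpose A *v y) - xs)
      = \<alpha> * norm (shrink (transpose A *v y) - shrink (transpose A *v yb))"
    unfolding xs using a by (simp flip: scaleR_diff_right)
  also have "\<dots> \<le> \<alpha> * norm (transpose A *v (y - yb))"
    using a shrink_lip by (intro mult_left_mono) (auto simp: matrix_vector_mult_diff_distrib)
  also have "\<dots> \<le> \<alpha> * (spec_norm A * norm (y - yb))"
    using a spec_norm_bound_transpose[of A "y - yb"] by (intro mult_left_mono) auto
  finally show ?thesis unfolding yb(2) dist_norm by (simp add: mult_ac)
qed

lemma sqrt_rate_forms:
  assumes "\<mu> > 0" "0 \<le> d" "d \<le> sqrt \<mu> ^ k * d0"
  shows "d \<le> \<mu> powr (real k / 2) * d0" "d\<^sup>2 \<le> \<mu> ^ k * d0\<^sup>2"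
proof -
  have "sqrt \<mu> ^ k = (\<mu> powr (1/2)) powr (real k)" using assms by (simp add: powr_realpow powr_half_sqrt)
  then show "d \<le> \<mu> powr (real k / 2) * d0" using assms(3) by (simp add: powr_powr)
  have "d\<^sup>2 \<le> (sqrt \<mu> ^ k * d0)\<^sup>2" using assms by (intro power_mono) auto
  also have "\<dots> = \<mu> ^ k * d0\<^sup>2"
    using assms(1) by (simp add: power_mult_distrib power_mult[symmetric] mult.commute[of k 2] power_mult)
  finally show "d\<^sup>2 \<le> \<mu> ^ k * d0\<^sup>2" .
qed

theorem mainTheorem18:
  fixes A :: "real^'n^'m" and b :: "real^'m" and \<alpha> h :: real
    and xs :: "real^'n" and x :: "nat \<Rightarrow> real^'n" and y :: "nat \<Rightarrow> real^'m"
  assumes "A \<noteq> 0" and "b \<noteq> 0" and "\<exists>z. A *v z = b" and "\<alpha> > 0"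
    and "is_rbp_solution A b \<alpha> xs"
    and "0 < h"
    and "h < 2 * nu_const A \<alpha> xs / (\<alpha>\<^sup>2 * spec_norm A ^ 4)"
    and "\<And>k. x (Suc k) = \<alpha> *\<^sub>R shrink (transpose A *v y k)"
    and "\<And>k. y (Suc k) = y k - h *\<^sub>R dual_grad A b \<alpha> (y k)"
  shows "let \<mu> = 1 - 2 * h * nu_const A \<alpha> xs + h\<^sup>2 * \<alpha>\<^sup>2 * spec_norm A ^ 4;
             L = \<alpha> * (spec_norm A)\<^sup>2;
             fstar = (INF z. dual_f A b \<alpha> z);
             d0 = infdist (y 0) (Ystar A \<alpha> xs)
         in 0 < \<mu> \<and> \<mu> < 1
          \<and> (\<forall>u v. norm (dual_grad A b \<alpha> u - dual_grad A b \<alpha> v) \<le> L * norm (u - v))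
          \<and> (\<forall>k. infdist (y k) (Ystar A \<alpha> xs) \<le> \<mu> powr (real k / 2) * d0
               \<and> dual_f A b \<alpha> (y k) - fstar \<le> L / 2 * \<mu> ^ k * d0\<^sup>2
               \<and> norm (x (Suc k) - xs) \<le> \<alpha> * spec_norm A * infdist (y k) (Ystar A \<alpha> xs))"
proof -
  note A0 = assms(1) and a = assms(4) and h0 = assms(6) and xdef = assms(8) and ydef = assms(9)
  define Y where "Y = Ystar A \<alpha> xs"
  define L where "L = \<alpha> * (spec_norm A)\<^sup>2"
  define \<mu> where "\<mu> = 1 - 2 * h * nu_const A \<alpha> xs + h\<^sup>2 * L\<^sup>2"
  have L4: "\<alpha>\<^sup>2 * spec_norm A ^ 4 = L\<^sup>2" unfolding L_def by (simp add: power_mult_distrib flip: power_mult)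
  then have hL4: "h\<^sup>2 * \<alpha>\<^sup>2 * spec_norm A ^ 4 = h\<^sup>2 * L\<^sup>2" by (simp add: mult.assoc)
  have Axs: "A *v xs = b" using assms(5) unfolding is_rbp_solution_def by simp
  have xs0: "xs \<noteq> 0" using Axs assms(2) by auto
  have Yne: "Y \<noteq> {}" unfolding Y_def using assms(3) Ystar_nonempty[OF a _ assms(5)] by blast
  have L0: "L > 0" unfolding L_def using a spec_norm_pos[OF A0] by simp
  have \<mu>: "0 < \<mu>" "\<mu> < 1" unfolding \<mu>_def
    using rate_bounds[OF h0 nu_const_less[OF a A0 xs0, folded L_def] assms(7)[unfolded L4] L0] by auto
  have "infdist (y k) Y \<le> sqrt \<mu> ^ k * infdist (y 0) Y" for k
    using dual_step_contraction[OF a A0 Axs xs0 Yne[unfolded Y_def]] h0 \<mu>(1)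
    by (intro iterated_contraction) (simp_all add: ydef Y_def \<mu>_def L_def)
  then have rate: "infdist (y k) Y \<le> \<mu> powr (real k / 2) * infdist (y 0) Y"
    and rate2: "(infdist (y k) Y)\<^sup>2 \<le> \<mu> ^ k * (infdist (y 0) Y)\<^sup>2" for k
    using sqrt_rate_forms[OF \<mu>(1) infdist_nonneg] by blast+
  have "dual_f A b \<alpha> (y k) - (INF z. dual_f A b \<alpha> z) \<le> L / 2 * \<mu> ^ k * (infdist (y 0) Y)\<^sup>2" for k
    using order_trans[OF dual_gap_bound[OF a Axs Yne[unfolded Y_def], of "y k", folded L_def Y_def]
        mult_left_mono[OF rate2[of k], of "L / 2"]] L0
    by (simp add: mult.assoc)
  moreover have "norm (x (Suc k) - xs) \<le> \<alpha> * spec_norm A * infdist (y k) Y" for k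
    unfolding xdef Y_def by (rule primal_error_bound[OF a Yne[unfolded Y_def]])
  ultimately show ?thesis
    using \<mu> rate dual_grad_lipschitz[OF a, of A b, folded L_def]
    unfolding Let_def hL4 \<mu>_def[symmetric] L_def[symmetric] Y_def by blast
qed

end
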